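(* Under Conditions 1 and 2, $$\lim_{n\to\infty}\int_0^\infty R^{(n)}_\beta(\gamma_nt)\,dt=\frac1{b+m+\beta\sigma\lambda}<\infty .$$ Moreover, there exist constants $C>0$ and $n_0\ge1$ such that for all $n>n_0$ and all $\kappa\ge1$, $\int_0^\infty|R_\beta^{(n)}(\gamma_nt)|^\kappa dt\le C^\kappa$.
   Context: Notation: $\mathbb Z_+=\{1,2,\dots\}$, $\mathbb R_+=[0,\infty)$. For each $n\ge1$: $\lambda^{(n)}>0$; a probability $\Lambda^{(n)}$ on $\mathbb R_+$ with tail $\bar\Lambda^{(n)}(t)=\Lambda^{(n)}((t,\infty))$, $\eta^{(n)}=\int_0^\infty y\Lambda^{(n)}(dy)$, $\sigma^{(n)}=\frac12\int_0^\infty y^2\Lambda^{(n)}(dy)$ finite; probability laws $(p_k^{(n)})_{k\ge1}$, $(q_k^{(n)})_{k\ge1}$ on $\mathbb Z_+$ with generating functions $g^{(n)},h^{(n)}$, $m^{(n)}=\sum_kkp_k^{(n)}<\infty$; $\gamma_n>0$ with $\gamma_n\to\infty$, $\gamma_n/n\to\gamma_*\in[0,\infty)$. $\phi^{(n)}(z)=n\gamma_n[g^{(n)}(1-z/n)-(1-z/n)]$, $\psi^{(n)}(z)=\gamma_n[1-h^{(n)}(1-z/n)]$ for $z\in[0,n]$. Condition 1: (i) $\lambda^{(n)}\to\lambda>0$, $\eta^{(n)}\to\eta>0$, $\sigma^{(n)}\to\sigma>0$, $\gamma_n(1-\lambda^{(n)}\eta^{(n)})\to b\in\mathbb R$; (ii)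 $\psi^{(n)}\to\psi$ uniformly on compacts of $[0,\infty)$; (iii) $\{\phi^{(n)}\}$ is uniformly Lipschitz on bounded intervals and converges uniformly on compacts to a continuous $\phi$. Under Condition 1, $\lambda\eta=1$ and $m:=\lim_n\gamma_n(1-m^{(n)})$ exists (so $\gamma_n(1-\lambda^{(n)}\eta^{(n)}m^{(n)})\to b+m$). Condition 2 (for some $\alpha\in(1,2)$): (1) there are $C,k_0>0$ with $n\gamma_n\sum_{k\ge k_0}(k/n)^\alpha p^{(n)}_k+\sum_kk^\alpha q^{(n)}_k\le C$ for all $n$, and $\lim_{k_1\to\infty}\limsup_n\gamma_n\sum_{k\ge k_1}kp^{(n)}_k=0$; (2) there are $C_0>0$ and a probability $\Lambda^*$ on $\mathbb R_+$ with $\int t^{2\alpha}\Lambda^*(dt)<\infty$ and $\bar\Lambda^{(n)}\le C_0\bar\Lambda^*$ for all $n$. Fix $\beta\in[0,\infty)$ with $\beta>-(b+m)/(\sigma\lambda)$. Let $R^{(n)}$ be the unique locally integrable solution of $R^{(n)}(t)=\lambda^{(n)}m^{(n)}\bar\Lambda^{(n)}(t)+\lambda^{(n)}m^{(n)}\int_0^tR^{(n)}(t-s)\bar\Lambda^{(n)}(s)ds$, $t\ge0$, and $R^{(n)}_\beta(t)=e^{-\beta t/\gamma_n}R^{(n)}(t)$. *)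

theory Defs
  imports "HOL-Probability.Probability"
begin

definition gen_fun :: "(nat \<Rightarrow> real) \<Rightarrow> real \<Rightarrow> real" where
  "gen_fun p s = (\<Sum>k. p k * s ^ k)"

definition tail :: "real measure \<Rightarrow> real \<Rightarrow> real" where
  "tail M t = measure M {t<..}"

definition phi_n :: "(nat \<Rightarrow> real) \<Rightarrow> real \<Rightarrow> nat \<Rightarrow> real \<Rightarrow> real" where
  "phi_n p gn n z = real n * gn * (gen_fun p (1 - z / real n) - (1 - z / real n))"

definition psi_n :: "(nat \<Rightarrow> real) \<Rightarrow> real \<Rightarrow> nat \<Rightarrow> real \<Rightarrow> real" where
  "psi_n q gn n z = gn * (1 - gen_fun q (1 - z / real n))"

end

theory Submission
  imports Defs
begin

text \<open>
  Discounting by exp(-\<beta> t / \<gamma>_n) turns the renewal equation for R_n into a renewal equation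
  u = g + g * u whose kernel g(t) = exp(-\<beta> t / \<gamma>_n) \<lambda>_n m_n \<Lambda>_n(t, \<infinity>) is bounded, nonincreasing
  and of total mass G_n < 1. The solution of such a subcritical equation is integrable with
  integral G/(1 - G), and it is bounded by 7 sup g: a window of length 1/(2 sup g) feeds at most
  half of its own mass back into itself, while the mass it receives from earlier times is an
  overshoot probability, so every such window carries mass at most 2. Rescaling time by \<gamma>_n, the
  integral of R_n(\<gamma>_n t) exp(-\<beta> t) becomes G_n / (\<gamma>_n (1 - G_n)), and the expansion
  exp(-x) = 1 - x + O(x^\<alpha>), whose error is controlled by the 2\<alpha>-th moment of the dominating law,
  gives \<gamma>_n (1 - G_n) \<rightarrow> b + m + \<beta> \<sigma> \<lambda>.
\<close>

lemma nn_integral_indicator_convolution: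
  fixes g v :: "real \<Rightarrow> real"
  assumes [measurable]: "g \<in> borel_measurable borel" "v \<in> borel_measurable borel" "A \<in> sets borel"
  shows "(\<integral>\<^sup>+t. indicator A t * (\<integral>\<^sup>+s. ennreal (g s) * ennreal (v (t - s)) \<partial>lborel) \<partial>lborel)
       = (\<integral>\<^sup>+s. ennreal (g s) * (\<integral>\<^sup>+ w. indicator A (s + w) * ennreal (v w) \<partial>lborel) \<partial>lborel)"
proof -
  have "(\<integral>\<^sup>+t. indicator A t * (\<integral>\<^sup>+s. ennreal (g s) * ennreal (v (t - s)) \<partial>lborel) \<partial>lborel)
     = (\<integral>\<^sup>+t. (\<integral>\<^sup>+s. indicator A t * (ennreal (g s) * ennreal (v (t - s))) \<partial>lborel) \<partial>lborel)"
    by (subst nn_integral_cmult) auto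
  also have "\<dots> = (\<integral>\<^sup>+s. (\<integral>\<^sup>+t. indicator A t * (ennreal (g s) * ennreal (v (t - s))) \<partial>lborel) \<partial>lborel)"
    by (rule lborel_pair.Fubini'[symmetric]) measurable
  also have "\<dots> = (\<integral>\<^sup>+s. ennreal (g s) * (\<integral>\<^sup>+t. indicator A t * ennreal (v (t - s)) \<partial>lborel) \<partial>lborel)"
    by (rule nn_integral_cong, subst nn_integral_cmult[symmetric]) (auto intro!: nn_integral_cong simp: mult_ac)
  also have "\<dots> = (\<integral>\<^sup>+s. ennreal (g s) * (\<integral>\<^sup>+ w. indicator A (s + w) * ennreal (v w) \<partial>lborel) \<partial>lborel)"
  proof (rule nn_integral_cong)
    fix s
    have "(\<integral>\<^sup>+t. indicator A t * ennreal (v (t - s)) \<partial>lborel)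
        = (\<integral>\<^sup>+x. indicator A (s + x) * ennreal (v x) \<partial>lborel)"
      using nn_integral_real_affine[where c=1 and t=s and f="\<lambda>t. indicator A t * ennreal (v (t - s))"] by simp
    then show "ennreal (g s) * (\<integral>\<^sup>+t. indicator A t * ennreal (v (t - s)) \<partial>lborel)
        = ennreal (g s) * (\<integral>\<^sup>+ w. indicator A (s + w) * ennreal (v w) \<partial>lborel)"
      by simp
  qed
  finally show ?thesis .
qed

lemma ennreal_le_div_if_le_affine:
  fixes x :: ennreal and a c :: real
  assumes finite: "x < \<infinity>" and le: "x \<le> ennreal a + ennreal c * x"
    and a: "0 \<le> a" and c: "0 \<le> c" "c < 1"
  shows "x \<le> ennreal (a / (1 - c))"
proof -
  obtain r where r: "x = ennreal r" "0 \<le> r"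
    using finite by (cases x) (auto simp: less_top ennreal_cases)
  have "ennreal r \<le> ennreal (a + c * r)"
    using le r a c by (simp add: ennreal_mult ennreal_plus)
  moreover have "0 \<le> a + c * r" using a c r by simp
  ultimately have "r \<le> a + c * r" using ennreal_le_iff by blast
  then have "r \<le> a / (1 - c)" using c by (simp add: field_simps)
  then show ?thesis using r by simp
qed

locale subcritical_renewal =
  fixes g u :: "real \<Rightarrow> real" and K G :: real
  assumes kernel_measurable[measurable]: "g \<in> borel_measurable borel"
    and kernel_nonneg: "\<And>x. 0 \<le> g x"
    and kernel_le: "\<And>x. g x \<le> K"
    and kernel_neg: "\<And>x. x < 0 \<Longrightarrow> g x = 0"
    and kernel_antimono: "\<And>x y. 0 \<le> x \<Longrightarrow> x \<le> y \<Longrightarrow> g y \<le> g x"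
    and nn_integral_kernel: "(\<integral>\<^sup>+x. ennreal (g x) \<partial>lborel) = ennreal G"
    and mass_less_1: "G < 1"
    and mass_nonneg: "0 \<le> G"
    and bound_pos: "0 < K"
    and solution_measurable[measurable]: "u \<in> borel_measurable borel"
    and solution_neg: "\<And>x. x < 0 \<Longrightarrow> u x = 0"
    and solution_locally_finite: "\<And>x. (\<integral>\<^sup>+t. indicator {..x} t * ennreal \<bar>u t\<bar> \<partial>lborel) < \<infinity>"
    and renewal_equation: "\<And>t. u t = g t + (\<integral>s. g s * u (t - s) \<partial>lborel)"
begin

definition mass_upto :: "real \<Rightarrow> ennreal" where
  "mass_upto x = (\<integral>\<^sup>+t. indicator {..x} t * ennreal \<bar>u t\<bar> \<partial>lborel)"

lemma mass_upto_mono: "x \<le> y \<Longrightarrow> mass_upto x \<le> mass_upto y"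
  unfolding mass_upto_def by (intro nn_integral_mono) (auto simp: indicator_def)

lemma abs_solution_le_convolution:
  "ennreal \<bar>u t\<bar> \<le> ennreal (g t) + (\<integral>\<^sup>+s. ennreal (g s) * ennreal \<bar>u (t - s)\<bar> \<partial>lborel)"
proof -
  have a: "ennreal \<bar>u t\<bar> \<le> ennreal (g t) + ennreal (norm (\<integral>s. g s * u (t - s) \<partial>lborel))"
  proof -
    have "\<bar>u t\<bar> \<le> g t + norm (\<integral>s. g s * u (t - s) \<partial>lborel)"
      using renewal_equation[of t] kernel_nonneg[of t] abs_triangle_ineq[of "g t"] by simp
    then show ?thesis
      by (metis ennreal_leI ennreal_plus kernel_nonneg norm_ge_zero)
  qed
  have b: "ennreal (norm (\<integral>s. g s * u (t - s) \<partial>lborel))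
      \<le> (\<integral>\<^sup>+s. ennreal (g s) * ennreal \<bar>u (t - s)\<bar> \<partial>lborel)"
  proof (cases "integrable lborel (\<lambda>s. g s * u (t - s))")
    case True
    then have "ennreal (norm (\<integral>s. g s * u (t - s) \<partial>lborel))
        \<le> (\<integral>\<^sup>+s. ennreal (norm (g s * u (t - s))) \<partial>lborel)"
      using integral_norm_bound_ennreal by blast
    also have "\<dots> = (\<integral>\<^sup>+s. ennreal (g s) * ennreal \<bar>u (t - s)\<bar> \<partial>lborel)"
      by (intro nn_integral_cong) (simp add: abs_mult kernel_nonneg ennreal_mult)
    finally show ?thesis .
  next
    case False
    then show ?thesis by (simp add: not_integrable_integral_eq)
  qed
  from a b show ?thesis by (meson add_left_mono order_trans)
qed

lemma mass_upto_finite: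
  "mass_upto x < \<infinity>" using solution_locally_finite unfolding mass_upto_def by simp

lemma shifted_mass_upto:
  "(\<integral>\<^sup>+ w. indicator {..x} (s + w) * ennreal \<bar>u w\<bar> \<partial>lborel) = mass_upto (x - s)"
  unfolding mass_upto_def by (intro nn_integral_cong) (auto simp: indicator_def)

lemma mass_upto_le_convolution:
  "mass_upto x \<le> (\<integral>\<^sup>+t. indicator {..x} t * ennreal (g t) \<partial>lborel) + (\<integral>\<^sup>+s. ennreal (g s) * mass_upto (x - s) \<partial>lborel)"
proof -
  have "mass_upto x \<le> (\<integral>\<^sup>+t. indicator {..x} t * ennreal (g t) + indicator {..x} t * (\<integral>\<^sup>+s. ennreal (g s) * ennreal \<bar>u (t - s)\<bar> \<partial>lborel) \<partial>lborel)"
    unfolding mass_upto_def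
    by (intro nn_integral_mono) (metis distrib_left mult_left_mono abs_solution_le_convolution zero_le)
  also have "\<dots> = (\<integral>\<^sup>+t. indicator {..x} t * ennreal (g t) \<partial>lborel) + (\<integral>\<^sup>+t. indicator {..x} t * (\<integral>\<^sup>+s. ennreal (g s) * ennreal \<bar>u (t - s)\<bar> \<partial>lborel) \<partial>lborel)"
    by (rule nn_integral_add) auto
  also have "(\<integral>\<^sup>+t. indicator {..x} t * (\<integral>\<^sup>+s. ennreal (g s) * ennreal \<bar>u (t - s)\<bar> \<partial>lborel) \<partial>lborel)
      = (\<integral>\<^sup>+s. ennreal (g s) * mass_upto (x - s) \<partial>lborel)"
    using nn_integral_indicator_convolution[of g "\<lambda>t. \<bar>u t\<bar>" "{..x}"] by (simp add: shifted_mass_upto)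
  finally show ?thesis .
qed

lemma mass_upto_le_affine: "mass_upto x \<le> ennreal G + ennreal G * mass_upto x"
proof -
  have "(\<integral>\<^sup>+t. indicator {..x} t * ennreal (g t) \<partial>lborel) \<le> (\<integral>\<^sup>+t. ennreal (g t) \<partial>lborel)"
    by (intro nn_integral_mono) (auto simp: indicator_def)
  moreover have "(\<integral>\<^sup>+s. ennreal (g s) * mass_upto (x - s) \<partial>lborel)
      \<le> (\<integral>\<^sup>+s. ennreal (g s) * mass_upto x \<partial>lborel)"
  proof (intro nn_integral_mono)
    fix s show "ennreal (g s) * mass_upto (x - s) \<le> ennreal (g s) * mass_upto x"
      by (cases "s < 0") (auto simp: kernel_neg intro!: mult_left_mono mass_upto_mono)
  qed
  moreover have "(\<integral>\<^sup>+s. ennreal (g s) * mass_upto x \<partial>lborel) = ennreal G * mass_upto x"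
    by (subst nn_integral_multc) (auto simp: nn_integral_kernel)
  ultimately show ?thesis using mass_upto_le_convolution[of x] nn_integral_kernel by (metis add_mono order_trans)
qed

lemma mass_upto_le: "mass_upto x \<le> ennreal (G / (1 - G))"
  by (rule ennreal_le_div_if_le_affine[OF mass_upto_finite mass_upto_le_affine mass_nonneg mass_nonneg mass_less_1])

lemma nn_integral_abs_solution_le:
  "(\<integral>\<^sup>+t. ennreal \<bar>u t\<bar> \<partial>lborel) \<le> ennreal (G / (1 - G))"
proof -
  have eq: "(\<lambda>t. ennreal \<bar>u t\<bar>) = (\<lambda>t. SUP n. indicator {..real n} t * ennreal \<bar>u t\<bar>)"
  proof
    fix t
    show "ennreal \<bar>u t\<bar> = (SUP n. indicator {..real n} t * ennreal \<bar>u t\<bar>)"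
    proof (rule antisym)
      obtain n where "t \<le> real n" using real_arch_simple by blast
      then show "ennreal \<bar>u t\<bar> \<le> (SUP n. indicator {..real n} t * ennreal \<bar>u t\<bar>)"
        by (intro SUP_upper2[of n]) auto
      show "(SUP n. indicator {..real n} t * ennreal \<bar>u t\<bar>) \<le> ennreal \<bar>u t\<bar>"
        by (intro SUP_least) (auto simp: indicator_def)
    qed
  qed
  have "(\<integral>\<^sup>+t. ennreal \<bar>u t\<bar> \<partial>lborel) = (SUP n. mass_upto (real n))"
    unfolding mass_upto_def
    by (subst eq, rule nn_integral_monotone_convergence_SUP) (auto simp: incseq_def le_fun_def indicator_def)
  also have "\<dots> \<le> ennreal (G / (1 - G))" by (intro SUP_least mass_upto_le)
  finally show ?thesis .
qed

lemma solution_integrable: "integrable lborel u"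
  using nn_integral_abs_solution_le by (intro integrableI_bounded) (auto intro: le_less_trans[OF _ ennreal_less_top])

definition kernel_mass_upto :: "real \<Rightarrow> ennreal" where
  "kernel_mass_upto y = (\<integral>\<^sup>+w. indicator {..y} w * ennreal (g w) \<partial>lborel)"

definition kernel_mass_above :: "real \<Rightarrow> ennreal" where
  "kernel_mass_above y = (\<integral>\<^sup>+w. indicator {y<..} w * ennreal (g w) \<partial>lborel)"

lemma kernel_mass_upto_plus_above: "kernel_mass_upto y + kernel_mass_above y = ennreal G"
proof -
  have "kernel_mass_upto y + kernel_mass_above y
      = (\<integral>\<^sup>+w. indicator {..y} w * ennreal (g w) + indicator {y<..} w * ennreal (g w) \<partial>lborel)"
    unfolding kernel_mass_upto_def kernel_mass_above_def by (rule nn_integral_add[symmetric]) auto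
  also have "\<dots> = (\<integral>\<^sup>+w. ennreal (g w) \<partial>lborel)"
    by (intro nn_integral_cong) (auto simp: indicator_def)
  finally show ?thesis using nn_integral_kernel by simp
qed

lemma kernel_mass_upto_measurable[measurable]: "kernel_mass_upto \<in> borel_measurable borel"
proof -
  have "kernel_mass_upto = (\<lambda>y. \<integral>\<^sup>+w. ennreal (if w \<le> y then g w else 0) \<partial>lborel)"
    unfolding kernel_mass_upto_def by (auto intro!: ext nn_integral_cong simp: indicator_def)
  also have "\<dots> \<in> borel_measurable borel" by measurable
  finally show ?thesis .
qed

lemma kernel_mass_above_measurable[measurable]: "kernel_mass_above \<in> borel_measurable borel"
proof -
  have "kernel_mass_above = (\<lambda>y. \<integral>\<^sup>+w. ennreal (if y < w then g w else 0) \<partial>lborel)"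
    unfolding kernel_mass_above_def by (auto intro!: ext nn_integral_cong simp: indicator_def)
  also have "\<dots> \<in> borel_measurable borel" by measurable
  finally show ?thesis .
qed

lemma convolution_mass_upto_eq:
  "(\<integral>\<^sup>+s. ennreal (g s) * mass_upto (x - s) \<partial>lborel)
      = (\<integral>\<^sup>+t. indicator {..x} t * ennreal \<bar>u t\<bar> * kernel_mass_upto (x - t) \<partial>lborel)"
proof -
  have "(\<integral>\<^sup>+s. ennreal (g s) * mass_upto (x - s) \<partial>lborel)
     = (\<integral>\<^sup>+s. \<integral>\<^sup>+t. indicator {..x} t * ennreal \<bar>u t\<bar> * (if s + t \<le> x then ennreal (g s) else 0) \<partial>lborel \<partial>lborel)"
  proof (intro nn_integral_cong)
    fix s
    show "ennreal (g s) * mass_upto (x - s)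
        = (\<integral>\<^sup>+t. indicator {..x} t * ennreal \<bar>u t\<bar> * (if s + t \<le> x then ennreal (g s) else 0) \<partial>lborel)"
    proof (cases "s < 0")
      case True
      have z: "(if s + t \<le> x then ennreal (g s) else 0) = 0" for t using kernel_neg[OF True] by simp
      show ?thesis unfolding z using kernel_neg[OF True] by simp
    next
      case False
      then show ?thesis unfolding mass_upto_def
        by (subst nn_integral_cmult[symmetric]) (auto intro!: nn_integral_cong simp: indicator_def mult.commute)
    qed
  qed
  also have "\<dots> = (\<integral>\<^sup>+t. \<integral>\<^sup>+s. indicator {..x} t * ennreal \<bar>u t\<bar> * (if s + t \<le> x then ennreal (g s) else 0) \<partial>lborel \<partial>lborel)"
    by (rule lborel_pair.Fubini') measurable
  also have "\<dots> = (\<integral>\<^sup>+t. indicator {..x} t * ennreal \<bar>u t\<bar> * kernel_mass_upto (x - t) \<partial>lborel)"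
    unfolding kernel_mass_upto_def by (intro nn_integral_cong, subst nn_integral_cmult) (auto intro!: arg_cong2[where f="(*)"] nn_integral_cong simp: indicator_def)
  finally show ?thesis .
qed

definition overshoot :: "real \<Rightarrow> ennreal" where
  "overshoot x = (\<integral>\<^sup>+t. indicator {..x} t * ennreal \<bar>u t\<bar> * kernel_mass_above (x - t) \<partial>lborel)"

text \<open>Adding kernel_mass_above x + overshoot x to the renewal inequality for mass_upto x
  completes both kernel masses to G, so the right-hand side becomes G + G * mass_upto x, which is
  at most 1 + mass_upto x; cancelling the finite mass_upto x gives the bound.\<close>

lemma kernel_mass_above_plus_overshoot_le_1: "kernel_mass_above x + overshoot x \<le> 1"
proof -
  have "mass_upto x + (kernel_mass_above x + overshoot x)
      \<le> (kernel_mass_upto x + kernel_mass_above x) + ((\<integral>\<^sup>+t. indicator {..x} t * ennreal \<bar>u t\<bar> * kernel_mass_upto (x - t) \<partial>lborel) + overshoot x)"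
  proof -
    have "mass_upto x \<le> kernel_mass_upto x + (\<integral>\<^sup>+t. indicator {..x} t * ennreal \<bar>u t\<bar> * kernel_mass_upto (x - t) \<partial>lborel)"
      using mass_upto_le_convolution[of x] convolution_mass_upto_eq[of x] unfolding kernel_mass_upto_def by simp
    then show ?thesis by (simp add: add_mono add.assoc add.left_commute)
  qed
  also have "(\<integral>\<^sup>+t. indicator {..x} t * ennreal \<bar>u t\<bar> * kernel_mass_upto (x - t) \<partial>lborel) + overshoot x
      = (\<integral>\<^sup>+t. indicator {..x} t * ennreal \<bar>u t\<bar> * (kernel_mass_upto (x - t) + kernel_mass_above (x - t)) \<partial>lborel)"
    unfolding overshoot_def by (subst nn_integral_add[symmetric]) (auto intro!: nn_integral_cong simp: distrib_left)
  also have "\<dots> = ennreal G * mass_upto x"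
    unfolding mass_upto_def kernel_mass_upto_plus_above by (subst nn_integral_multc) (auto simp: mult.commute)
  also have "kernel_mass_upto x + kernel_mass_above x + ennreal G * mass_upto x \<le> mass_upto x + 1"
  proof -
    have "ennreal G * mass_upto x \<le> 1 * mass_upto x" using mass_less_1 by (intro mult_right_mono) auto
    moreover have "ennreal G \<le> 1" using mass_less_1 by simp
    ultimately show ?thesis unfolding kernel_mass_upto_plus_above by (simp add: add_mono add.commute)
  qed
  finally have "mass_upto x + (kernel_mass_above x + overshoot x) \<le> mass_upto x + 1" .
  then show ?thesis using mass_upto_finite[of x] by (auto simp: ennreal_add_left_cancel_le)
qed

definition window :: real where
  "window = 1 / (2 * K)"
lemma window_pos: "0 < window" unfolding window_def using bound_pos by simp
lemma bound_times_window: "K * window = 1/2" unfolding window_def using bound_pos by simp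

definition window_mass :: "real \<Rightarrow> ennreal" where
  "window_mass x = (\<integral>\<^sup>+t. indicator {x..x+window} t * ennreal \<bar>u t\<bar> \<partial>lborel)"

lemma window_mass_finite: "window_mass x < \<infinity>"
proof -
  have "window_mass x \<le> mass_upto (x + window)" unfolding window_mass_def mass_upto_def by (intro nn_integral_mono) (auto simp: indicator_def)
  then show ?thesis using mass_upto_finite le_less_trans by blast
qed

lemma kernel_mass_above_closed:
  "(\<integral>\<^sup>+w. indicator {y..} w * ennreal (g w) \<partial>lborel) = kernel_mass_above y"
  unfolding kernel_mass_above_def
  by (intro nn_integral_cong_AE) (auto intro!: eventually_mono[OF AE_lborel_singleton[of y]] simp: indicator_def)

lemma convolution_flip:
  "(\<integral>\<^sup>+s. ennreal (g s) * ennreal \<bar>u (t - s)\<bar> \<partial>lborel)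
      = (\<integral>\<^sup>+s. ennreal \<bar>u s\<bar> * ennreal (g (t - s)) \<partial>lborel)"
  using nn_integral_real_affine[where c="-1" and t=t and f="\<lambda>s. ennreal \<bar>u s\<bar> * ennreal (g (t - s))"] by (simp add: mult.commute)

lemma shifted_window_kernel_le:
  "(\<integral>\<^sup>+ w. indicator {x..x+window} (s + w) * ennreal (g w) \<partial>lborel)
   \<le> indicator {..<x} s * kernel_mass_above (x - s) + indicator {x..x+window} s * ennreal (1/2)"
proof (cases "s < x")
  case True
  have "(\<integral>\<^sup>+ w. indicator {x..x+window} (s + w) * ennreal (g w) \<partial>lborel)
      \<le> (\<integral>\<^sup>+w. indicator {x-s..} w * ennreal (g w) \<partial>lborel)"
    by (intro nn_integral_mono) (auto simp: indicator_def)
  then show ?thesis using True by (simp add: kernel_mass_above_closed)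
next
  case False
  show ?thesis
  proof (cases "s \<le> x + window")
    case True
    have "(\<integral>\<^sup>+ w. indicator {x..x+window} (s + w) * ennreal (g w) \<partial>lborel)
        \<le> (\<integral>\<^sup>+w. ennreal K * indicator {x-s..x+window-s} w \<partial>lborel)"
      by (intro nn_integral_mono) (auto simp: indicator_def kernel_le ennreal_leI)
    also have "\<dots> = ennreal K * ennreal window" using window_pos by (subst nn_integral_cmult_indicator) auto
    also have "\<dots> = ennreal (1/2)" using bound_times_window bound_pos window_pos by (metis ennreal_mult less_imp_le)
    finally show ?thesis using True False by simp
  next
    case False2: False
    have z: "(\<lambda>w. indicator {x..x+window} (s + w) * ennreal (g w)) = (\<lambda>w. 0)"
    proof
      fix w show "indicator {x..x+window} (s + w) * ennreal (g w) = 0"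
        using False2 kernel_neg[of w] by (auto simp: indicator_def)
    qed
    have "(\<integral>\<^sup>+ w. indicator {x..x+window} (s + w) * ennreal (g w) \<partial>lborel) = 0" unfolding z by simp
    then show ?thesis by simp
  qed
qed

text \<open>A window of length 1/(2K) receives at most half of its own mass through g \<le> K; what
  it receives from before the window is bounded by the overshoot.\<close>

lemma window_mass_le_affine: "window_mass x \<le> 1 + ennreal (1/2) * window_mass x"
proof -
  have "window_mass x \<le> (\<integral>\<^sup>+t. indicator {x..x+window} t * ennreal (g t) + indicator {x..x+window} t * (\<integral>\<^sup>+s. ennreal (g s) * ennreal \<bar>u (t - s)\<bar> \<partial>lborel) \<partial>lborel)"
    unfolding window_mass_def
    by (intro nn_integral_mono) (metis distrib_left mult_left_mono abs_solution_le_convolution zero_le)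
  also have "\<dots> = (\<integral>\<^sup>+t. indicator {x..x+window} t * ennreal (g t) \<partial>lborel) + (\<integral>\<^sup>+t. indicator {x..x+window} t * (\<integral>\<^sup>+s. ennreal \<bar>u s\<bar> * ennreal (g (t - s)) \<partial>lborel) \<partial>lborel)"
    unfolding convolution_flip by (rule nn_integral_add) auto
  also have "(\<integral>\<^sup>+t. indicator {x..x+window} t * (\<integral>\<^sup>+s. ennreal \<bar>u s\<bar> * ennreal (g (t - s)) \<partial>lborel) \<partial>lborel)
     = (\<integral>\<^sup>+s. ennreal \<bar>u s\<bar> * (\<integral>\<^sup>+ w. indicator {x..x+window} (s + w) * ennreal (g w) \<partial>lborel) \<partial>lborel)"
    using nn_integral_indicator_convolution[of "\<lambda>s. \<bar>u s\<bar>" g "{x..x+window}"] by simp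
  also have "\<dots> \<le> (\<integral>\<^sup>+s. indicator {..x} s * ennreal \<bar>u s\<bar> * kernel_mass_above (x - s) + ennreal (1/2) * (indicator {x..x+window} s * ennreal \<bar>u s\<bar>) \<partial>lborel)"
  proof (intro nn_integral_mono)
    fix s
    have "ennreal \<bar>u s\<bar> * (\<integral>\<^sup>+ w. indicator {x..x+window} (s + w) * ennreal (g w) \<partial>lborel)
       \<le> ennreal \<bar>u s\<bar> * (indicator {..<x} s * kernel_mass_above (x - s) + indicator {x..x+window} s * ennreal (1/2))"
      by (intro mult_left_mono shifted_window_kernel_le) auto
    also have "\<dots> \<le> indicator {..x} s * ennreal \<bar>u s\<bar> * kernel_mass_above (x - s) + ennreal (1/2) * (indicator {x..x+window} s * ennreal \<bar>u s\<bar>)"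
      by (auto simp: indicator_def distrib_left mult_ac)
    finally show "ennreal \<bar>u s\<bar> * (\<integral>\<^sup>+ w. indicator {x..x+window} (s + w) * ennreal (g w) \<partial>lborel)
        \<le> indicator {..x} s * ennreal \<bar>u s\<bar> * kernel_mass_above (x - s) + ennreal (1/2) * (indicator {x..x+window} s * ennreal \<bar>u s\<bar>)" .
  qed
  also have "\<dots> = overshoot x + ennreal (1/2) * window_mass x"
    unfolding overshoot_def window_mass_def by (subst nn_integral_add) (auto simp: nn_integral_cmult)
  finally have "window_mass x \<le> (\<integral>\<^sup>+t. indicator {x..x+window} t * ennreal (g t) \<partial>lborel) + (overshoot x + ennreal (1/2) * window_mass x)"
    by (simp add: add_mono)
  moreover have "(\<integral>\<^sup>+t. indicator {x..x+window} t * ennreal (g t) \<partial>lborel) \<le> kernel_mass_above x"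
    unfolding kernel_mass_above_closed[symmetric] by (intro nn_integral_mono) (auto simp: indicator_def)
  ultimately have "window_mass x \<le> (kernel_mass_above x + overshoot x) + ennreal (1/2) * window_mass x"
    by (metis (no_types, lifting) add.assoc add_right_mono order_trans)
  also have "\<dots> \<le> 1 + ennreal (1/2) * window_mass x" using kernel_mass_above_plus_overshoot_le_1 by (simp add: add_right_mono)
  finally show ?thesis .
qed

lemma window_mass_le_2: "window_mass x \<le> 2"
  using ennreal_le_div_if_le_affine[OF window_mass_finite, of x 1 "1/2"] window_mass_le_affine[of x]
  by simp

text \<open>Extending g by its bound K to the left keeps it nonincreasing on [-window, \<infinity>), so g(s) is
  at most its average over [s - window, s] also for s < window. This turns the convolution
  g * |u| into an average of window masses.\<close>

definition kernel_extended :: "real \<Rightarrow> real" where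
  "kernel_extended w = (if w < 0 then K else g w)"
lemma kernel_extended_measurable[measurable]:
  "kernel_extended \<in> borel_measurable borel" unfolding kernel_extended_def by measurable

lemma kernel_le_window_average:
  "ennreal (g s) \<le> ennreal (1/window) * (\<integral>\<^sup>+ w. (if w \<le> s \<and> s \<le> w + window \<and> -window \<le> w then ennreal (kernel_extended w) else 0) \<partial>lborel)"
proof (cases "s < 0")
  case True then show ?thesis by (simp add: kernel_neg)
next
  case False
  have "ennreal (g s) * ennreal window = (\<integral>\<^sup>+ w. ennreal (g s) * indicator {s-window..s} w \<partial>lborel)"
    using window_pos by (subst nn_integral_cmult_indicator) auto
  also have "\<dots> \<le> (\<integral>\<^sup>+ w. (if w \<le> s \<and> s \<le> w + window \<and> -window \<le> w then ennreal (kernel_extended w) else 0) \<partial>lborel)"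
  proof (intro nn_integral_mono)
    fix w
    show "ennreal (g s) * indicator {s-window..s} w
        \<le> (if w \<le> s \<and> s \<le> w + window \<and> -window \<le> w then ennreal (kernel_extended w) else 0)"
      using False kernel_antimono[of w s] kernel_le[of s]
      by (auto simp: indicator_def kernel_extended_def ennreal_leI)
  qed
  finally have a: "ennreal (g s) * ennreal window
      \<le> (\<integral>\<^sup>+ w. (if w \<le> s \<and> s \<le> w + window \<and> -window \<le> w then ennreal (kernel_extended w) else 0) \<partial>lborel)" .
  have "ennreal (g s) = ennreal (1/window) * (ennreal (g s) * ennreal window)"
    using window_pos kernel_nonneg[of s] by (simp add: ennreal_mult[symmetric])
  also have "\<dots> \<le> ennreal (1/window) * (\<integral>\<^sup>+ w. (if w \<le> s \<and> s \<le> w + window \<and> -window \<le> w then ennreal (kernel_extended w) else 0) \<partial>lborel)"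
    by (intro mult_left_mono a) auto
  finally show ?thesis .
qed

lemma nn_integral_kernel_extended_le:
  "(\<integral>\<^sup>+ w. indicator {-window..} w * ennreal (kernel_extended w) \<partial>lborel) \<le> ennreal (K * window + G)"
proof -
  have "(\<integral>\<^sup>+ w. indicator {-window..} w * ennreal (kernel_extended w) \<partial>lborel)
      \<le> (\<integral>\<^sup>+ w. ennreal K * indicator {-window..0} w + ennreal (g w) \<partial>lborel)"
    by (intro nn_integral_mono) (auto simp: indicator_def kernel_extended_def kernel_neg)
  also have "\<dots> = ennreal K * ennreal window + ennreal G"
    using window_pos by (subst nn_integral_add) (auto simp: nn_integral_kernel nn_integral_cmult_indicator)
  also have "\<dots> = ennreal (K * window + G)" using window_pos bound_pos mass_nonneg by (simp add: ennreal_mult ennreal_plus)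
  finally show ?thesis .
qed

lemma nn_integral_reflected_window:
  "(\<integral>\<^sup>+ s. indicator {w..w+window} s * ennreal \<bar>u (t - s)\<bar> \<partial>lborel) = window_mass (t - w - window)"
proof -
  have "(\<integral>\<^sup>+ s. indicator {w..w+window} s * ennreal \<bar>u (t - s)\<bar> \<partial>lborel)
     = (\<integral>\<^sup>+ y. indicator {w..w+window} (t - y) * ennreal \<bar>u y\<bar> \<partial>lborel)"
    using nn_integral_real_affine[where c="-1" and t=t and f="\<lambda>s. indicator {w..w+window} s * ennreal \<bar>u (t - s)\<bar>"]
    by simp
  also have "\<dots> = window_mass (t - w - window)"
    unfolding window_mass_def by (intro nn_integral_cong) (auto simp: indicator_def)
  finally show ?thesis .
qed

lemma convolution_abs_solution_le:
  "(\<integral>\<^sup>+s. ennreal (g s) * ennreal \<bar>u (t - s)\<bar> \<partial>lborel) \<le> ennreal (2 * K + 4 * G * K)"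
proof -
  let ?avg = "\<lambda>s w. if w \<le> s \<and> s \<le> w + window \<and> -window \<le> w then ennreal (kernel_extended w) else 0"
  have "(\<integral>\<^sup>+s. ennreal (g s) * ennreal \<bar>u (t - s)\<bar> \<partial>lborel)
     \<le> (\<integral>\<^sup>+s. ennreal (1/window) * (\<integral>\<^sup>+ w. ?avg s w \<partial>lborel) * ennreal \<bar>u (t - s)\<bar> \<partial>lborel)"
    by (intro nn_integral_mono mult_right_mono kernel_le_window_average) auto
  also have "\<dots> = ennreal (1/window) * (\<integral>\<^sup>+s. \<integral>\<^sup>+ w. ?avg s w * ennreal \<bar>u (t - s)\<bar> \<partial>lborel \<partial>lborel)"
    by (subst nn_integral_cmult[symmetric]) (auto intro!: nn_integral_cong simp: nn_integral_multc mult.assoc)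
  also have "(\<integral>\<^sup>+s. \<integral>\<^sup>+ w. ?avg s w * ennreal \<bar>u (t - s)\<bar> \<partial>lborel \<partial>lborel)
    = (\<integral>\<^sup>+w. \<integral>\<^sup>+ s. ?avg s w * ennreal \<bar>u (t - s)\<bar> \<partial>lborel \<partial>lborel)"
    by (rule lborel_pair.Fubini') measurable
  also have "\<dots> = (\<integral>\<^sup>+w. indicator {-window..} w * ennreal (kernel_extended w) * window_mass (t - w - window) \<partial>lborel)"
  proof (intro nn_integral_cong)
    fix w
    have "(\<integral>\<^sup>+ s. ?avg s w * ennreal \<bar>u (t - s)\<bar> \<partial>lborel)
      = (\<integral>\<^sup>+ s. indicator {-window..} w * ennreal (kernel_extended w) * (indicator {w..w+window} s * ennreal \<bar>u (t - s)\<bar>) \<partial>lborel)"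
      by (intro nn_integral_cong) (auto simp: indicator_def)
    also have "\<dots> = indicator {-window..} w * ennreal (kernel_extended w) * window_mass (t - w - window)"
      by (subst nn_integral_cmult) (auto simp: nn_integral_reflected_window)
    finally show "(\<integral>\<^sup>+ s. ?avg s w * ennreal \<bar>u (t - s)\<bar> \<partial>lborel)
       = indicator {-window..} w * ennreal (kernel_extended w) * window_mass (t - w - window)" .
  qed
  also have "\<dots> \<le> (\<integral>\<^sup>+w. indicator {-window..} w * ennreal (kernel_extended w) * 2 \<partial>lborel)"
    by (intro nn_integral_mono mult_left_mono window_mass_le_2) auto
  also have "\<dots> = (\<integral>\<^sup>+w. indicator {-window..} w * ennreal (kernel_extended w) \<partial>lborel) * 2"
    by (rule nn_integral_multc) auto
  also have "\<dots> \<le> ennreal (K * window + G) * 2"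
    by (intro mult_right_mono nn_integral_kernel_extended_le) auto
  finally have "(\<integral>\<^sup>+s. ennreal (g s) * ennreal \<bar>u (t - s)\<bar> \<partial>lborel)
      \<le> ennreal (1/window) * (ennreal (K * window + G) * 2)"
    by (simp add: mult_left_mono)
  also have "\<dots> = ennreal (2 * (K * window + G) / window)"
  proof -
    have "ennreal ((K * window + G) * 2) = ennreal (K * window + G) * ennreal 2"
      "ennreal (1/window * ((K * window + G) * 2)) = ennreal (1/window) * ennreal ((K * window + G) * 2)"
      using window_pos bound_pos mass_nonneg by (intro ennreal_mult; simp)+
    then show ?thesis by (simp add: mult_ac)
  qed
  also have "2 * (K * window + G) / window = 2 * K + 4 * G * K"
    using window_pos bound_pos unfolding window_def by (simp add: field_simps)
  finally show ?thesis .
qed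

lemma abs_solution_le: "\<bar>u t\<bar> \<le> 7 * K"
proof -
  have "ennreal \<bar>u t\<bar> \<le> ennreal (g t) + ennreal (2 * K + 4 * G * K)"
    using abs_solution_le_convolution[of t] convolution_abs_solution_le[of t] by (meson add_left_mono order_trans)
  then have "\<bar>u t\<bar> \<le> g t + (2 * K + 4 * G * K)"
    using kernel_nonneg[of t] bound_pos mass_nonneg by (simp add: ennreal_plus[symmetric] del: ennreal_plus)
  moreover have "4 * G * K \<le> 4 * K" using mass_less_1 bound_pos by simp
  ultimately show ?thesis using kernel_le[of t] by linarith
qed

lemma kernel_integrable: "integrable lborel g"
  using nn_integral_kernel kernel_nonneg by (intro integrableI_bounded) auto

lemma integral_kernel: "(\<integral>x. g x \<partial>lborel) = G"
proof -
  have "ennreal G = ennreal (\<integral>x. g x \<partial>lborel)"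
    using nn_integral_eq_integral[OF kernel_integrable] nn_integral_kernel kernel_nonneg by simp
  moreover have "0 \<le> (\<integral>x. g x \<partial>lborel)" by (intro integral_nonneg_AE) (simp add: kernel_nonneg)
  ultimately show ?thesis using mass_nonneg by simp
qed

lemma convolution_integrable:
  "integrable (lborel \<Otimes>\<^sub>M lborel) (\<lambda>(t, s). g s * u (t - s))"
proof (intro integrableI_bounded)
  show "(\<lambda>(t, s). g s * u (t - s)) \<in> borel_measurable (lborel \<Otimes>\<^sub>M lborel)" by measurable
  have "(\<integral>\<^sup>+ z. ennreal (norm ((\<lambda>(t, s). g s * u (t - s)) z)) \<partial>(lborel \<Otimes>\<^sub>M lborel))
     = (\<integral>\<^sup>+ t. \<integral>\<^sup>+ s. ennreal (norm (g s * u (t - s))) \<partial>lborel \<partial>lborel)"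
  proof -
    have m: "(\<lambda>z. ennreal (norm ((\<lambda>(t, s). g s * u (t - s)) z))) \<in> borel_measurable (lborel \<Otimes>\<^sub>M lborel)" by measurable
    show ?thesis using lborel.nn_integral_fst[OF m] by simp
  qed
  also have "\<dots> = (\<integral>\<^sup>+ t. indicator UNIV t * \<integral>\<^sup>+ s. ennreal (g s) * ennreal \<bar>u (t - s)\<bar> \<partial>lborel \<partial>lborel)"
    by (intro nn_integral_cong) (auto simp: abs_mult kernel_nonneg ennreal_mult)
  also have "\<dots> = (\<integral>\<^sup>+ s. ennreal (g s) * (\<integral>\<^sup>+ w. indicator UNIV (s + w) * ennreal \<bar>u w\<bar> \<partial>lborel) \<partial>lborel)"
    by (rule nn_integral_indicator_convolution) auto
  also have "\<dots> = ennreal G * (\<integral>\<^sup>+ w. ennreal \<bar>u w\<bar> \<partial>lborel)"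
    by (simp add: nn_integral_multc nn_integral_kernel)
  also have "\<dots> < \<infinity>"
    using le_less_trans[OF nn_integral_abs_solution_le ennreal_less_top] by (simp add: ennreal_mult_less_top)
  finally show "(\<integral>\<^sup>+ z. ennreal (norm ((\<lambda>(t, s). g s * u (t - s)) z)) \<partial>(lborel \<Otimes>\<^sub>M lborel))
      < \<infinity>" .
qed

lemma integral_solution: "(\<integral>x. u x \<partial>lborel) = G / (1 - G)"
proof -
  have F: "(\<integral>s. (\<integral>t. g s * u (t - s) \<partial>lborel) \<partial>lborel)
      = (\<integral>t. (\<integral>s. g s * u (t - s) \<partial>lborel) \<partial>lborel)"
    using lborel_pair.Fubini_integral[of "\<lambda>t s. g s * u (t - s)"] convolution_integrable by simp
  have inner: "(\<integral>t. g s * u (t - s) \<partial>lborel) = g s * (\<integral>x. u x \<partial>lborel)" for s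
  proof -
    have "(\<integral>x. u x \<partial>lborel) = (\<integral>x. u (- s + 1 * x) \<partial>lborel)"
      using lborel_integral_real_affine[of 1 u "-s"] by simp
    then show ?thesis by simp
  qed
  have "(\<integral>t. (\<integral>s. g s * u (t - s) \<partial>lborel) \<partial>lborel) = (\<integral>t. u t - g t \<partial>lborel)"
  proof (rule Bochner_Integration.integral_cong[OF refl])
    fix t show "(\<integral>s. g s * u (t - s) \<partial>lborel) = u t - g t" using renewal_equation[of t] by linarith
  qed
  also have "\<dots> = (\<integral>x. u x \<partial>lborel) - G"
    using solution_integrable kernel_integrable integral_kernel by simp
  finally have a: "(\<integral>t. (\<integral>s. g s * u (t - s) \<partial>lborel) \<partial>lborel) = (\<integral>x. u x \<partial>lborel) - G" .
  have "(\<integral>s. (\<integral>t. g s * u (t - s) \<partial>lborel) \<partial>lborel)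
      = (\<integral>s. g s * (\<integral>x. u x \<partial>lborel) \<partial>lborel)"
    by (simp only: inner)
  also have "\<dots> = G * (\<integral>x. u x \<partial>lborel)" using integral_kernel by simp
  finally have "(\<integral>x. u x \<partial>lborel) - G = G * (\<integral>x. u x \<partial>lborel)"
    using F a by simp
  then show ?thesis using mass_less_1 by (simp add: field_simps)
qed

lemma rescaled_solution_integrable:
  assumes "0 < a"
  shows "integrable lborel (\<lambda>t. u (a * t))"
  using lborel_integrable_real_affine[OF solution_integrable, of a 0] assms by simp

lemma integral_rescaled_solution:
  assumes a: "0 < a"
  shows "(\<integral>t. u (a * t) \<partial>lborel) = G / (1 - G) / a"
proof -
  have "(\<integral>x. u x \<partial>lborel) = \<bar>a\<bar> *\<^sub>R (\<integral>t. u (0 + a * t) \<partial>lborel)"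
    using a by (intro lborel_integral_real_affine) simp
  then show ?thesis using integral_solution a by (simp add: field_simps)
qed

lemma nn_integral_rescaled_solution_powr_le:
  assumes a: "0 < a" and \<kappa>: "1 \<le> \<kappa>"
  shows "(\<integral>\<^sup>+ t. ennreal (\<bar>u (a * t)\<bar> powr \<kappa>) \<partial>lborel)
      \<le> ennreal ((7 * K) powr (\<kappa> - 1) * (G / (1 - G) / a))"
proof -
  have pointwise: "\<bar>u x\<bar> powr \<kappa> \<le> (7 * K) powr (\<kappa> - 1) * \<bar>u x\<bar>" for x
  proof (cases "u x = 0")
    case False
    have "\<bar>u x\<bar> powr \<kappa> = \<bar>u x\<bar> powr (\<kappa> - 1) * \<bar>u x\<bar>"
      using powr_add[of "\<bar>u x\<bar>" "\<kappa> - 1" 1] False by simp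
    also have "\<dots> \<le> (7 * K) powr (\<kappa> - 1) * \<bar>u x\<bar>"
      using abs_solution_le[of x] \<kappa> by (auto intro!: mult_right_mono powr_mono2)
    finally show ?thesis .
  qed simp
  have scaled_mass: "ennreal a * (\<integral>\<^sup>+ t. ennreal \<bar>u (a * t)\<bar> \<partial>lborel) \<le> ennreal (G / (1 - G))"
    using nn_integral_real_affine[where c=a and t=0 and f="\<lambda>x. ennreal \<bar>u x\<bar>"] a
      nn_integral_abs_solution_le by simp
  have "(\<integral>\<^sup>+ t. ennreal \<bar>u (a * t)\<bar> \<partial>lborel) \<le> ennreal (G / (1 - G) / a)"
  proof -
    have "(\<integral>\<^sup>+ t. ennreal \<bar>u (a * t)\<bar> \<partial>lborel)
        = ennreal (1 / a) * (ennreal a * (\<integral>\<^sup>+ t. ennreal \<bar>u (a * t)\<bar> \<partial>lborel))"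
      using a by (simp add: ennreal_mult[symmetric] mult.assoc[symmetric])
    also have "\<dots> \<le> ennreal (1 / a) * ennreal (G / (1 - G))"
      using scaled_mass by (rule mult_left_mono) simp
    also have "\<dots> = ennreal (G / (1 - G) / a)"
      using a mass_less_1 mass_nonneg by (simp add: ennreal_mult[symmetric])
    finally show ?thesis .
  qed
  then have "(\<integral>\<^sup>+ t. ennreal ((7 * K) powr (\<kappa> - 1)) * ennreal \<bar>u (a * t)\<bar> \<partial>lborel)
      \<le> ennreal ((7 * K) powr (\<kappa> - 1)) * ennreal (G / (1 - G) / a)"
    by (subst nn_integral_cmult) (auto intro: mult_left_mono)
  moreover have "(\<integral>\<^sup>+ t. ennreal (\<bar>u (a * t)\<bar> powr \<kappa>) \<partial>lborel)
      \<le> (\<integral>\<^sup>+ t. ennreal ((7 * K) powr (\<kappa> - 1)) * ennreal \<bar>u (a * t)\<bar> \<partial>lborel)"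
    by (intro nn_integral_mono) (simp add: pointwise ennreal_mult[symmetric] ennreal_leI)
  ultimately show ?thesis
    using mass_less_1 mass_nonneg a by (simp add: ennreal_mult[symmetric])
qed

end

lemma tail_nonneg: "0 \<le> tail M t"
  unfolding tail_def by simp

lemma nn_integral_indicator_Ico:
  "(\<integral>\<^sup>+ t. ennreal (if 0 \<le> t \<and> t < y then 1 else 0) \<partial>lborel) = ennreal y"
proof (cases "0 \<le> y")
  case True
  have "(\<integral>\<^sup>+ t. ennreal (if 0 \<le> t \<and> t < y then 1 else 0) \<partial>lborel)
      = (\<integral>\<^sup>+ t. indicator {0..<y} t \<partial>lborel)"
    by (intro nn_integral_cong) (auto simp: indicator_def)
  then show ?thesis using True by simp
next
  case False
  then have "(\<lambda>t. ennreal (if 0 \<le> t \<and> t < y then 1 else 0)) = (\<lambda>t. 0)" by (auto intro!: ext)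
  then show ?thesis using False by (simp add: ennreal_neg)
qed

lemma nn_integral_id_Ico:
  assumes y: "0 \<le> y"
  shows "(\<integral>\<^sup>+ t. ennreal (if 0 \<le> t \<and> t < y then t else 0) \<partial>lborel) = ennreal (y\<^sup>2 / 2)"
proof -
  have ftc: "((\<lambda>t. t) has_integral (y\<^sup>2/2 - 0\<^sup>2/2)) {0..y}"
    using y by (intro fundamental_theorem_of_calculus)
      (auto intro!: derivative_eq_intros simp: has_real_derivative_iff_has_vector_derivative[symmetric])
  have "(\<integral>\<^sup>+ t. ennreal (if 0 \<le> t \<and> t < y then t else 0) \<partial>lborel)
      = (\<integral>\<^sup>+ t. ennreal (indicator {0..y} t * t) \<partial>lborel)"
    by (intro nn_integral_cong_AE)
      (auto intro!: eventually_mono[OF AE_lborel_singleton[of y]] simp: indicator_def)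
  also have "\<dots> = ennreal (y\<^sup>2/2)"
    using nn_integral_has_integral_lebesgue[OF _ ftc] by (simp add: ennreal_mult' ennreal_indicator)
  finally show ?thesis .
qed

lemma nn_integral_powr_Ico_le:
  assumes "0 \<le> a"
  shows "(\<integral>\<^sup>+ t. ennreal (if 0 \<le> t \<and> t < y then t powr a else 0) \<partial>lborel) \<le> ennreal (y * (max 0 y) powr a)"
proof (cases "0 \<le> y")
  case True
  have "(\<integral>\<^sup>+ t. ennreal (if 0 \<le> t \<and> t < y then t powr a else 0) \<partial>lborel)
      \<le> (\<integral>\<^sup>+ t. ennreal (y powr a) * indicator {0..<y} t \<partial>lborel)"
    using assms by (intro nn_integral_mono) (auto simp: indicator_def intro!: ennreal_leI powr_mono2)
  also have "\<dots> = ennreal (y * y powr a)"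
    using True by (subst nn_integral_cmult_indicator) (auto simp: ennreal_mult mult.commute)
  finally show ?thesis using True by simp
next
  case False
  then have "(\<lambda>t. ennreal (if 0 \<le> t \<and> t < y then t powr a else 0)) = (\<lambda>t. 0)" by (auto intro!: ext)
  then show ?thesis by simp
qed

lemma mult_powr_le_1_plus_powr:
  fixes y a :: real
  assumes a: "1 \<le> a"
  shows "y * (max 0 y) powr a \<le> 1 + \<bar>y\<bar> powr (2 * a)"
proof (cases "y \<le> 1")
  case True
  show ?thesis
  proof (cases "0 \<le> y")
    case nonneg: True
    have "y powr a \<le> 1" using True nonneg a by (simp add: powr_le1)
    then have "y * y powr a \<le> 1" using True nonneg by (metis mult_le_one powr_ge_zero)
    moreover have "y * (max 0 y) powr a = y * y powr a" using nonneg by simp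
    moreover have "0 \<le> \<bar>y\<bar> powr (2 * a)" by simp
    ultimately show ?thesis by linarith
  qed (simp add: mult_nonpos_nonneg)
next
  case False
  then have "y * y powr a = y powr (a + 1)" by (simp add: powr_add)
  also have "\<dots> \<le> y powr (2 * a)" using False a by (intro powr_mono) auto
  finally show ?thesis using False by simp
qed

locale nonneg_real_distribution =
  fixes M :: "real measure"
  assumes prob: "prob_space M"
    and sets_eq_borel: "sets M = sets borel"
    and nonneg_support: "measure M {0..} = 1"
begin

lemma AE_nonneg: "AE y in M. 0 \<le> y"
  using prob_space.AE_prob_1[OF prob nonneg_support] by (auto elim: eventually_mono)

lemma tail_le_1: "tail M t \<le> 1"
  unfolding tail_def using prob_space.prob_le_1[OF prob] by simp

lemma tail_antimono: "s \<le> t \<Longrightarrow> tail M t \<le> tail M s"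
  unfolding tail_def using sets_eq_borel
  by (intro finite_measure.finite_measure_mono prob_space.axioms(1)[OF prob]) auto

lemma borel_measurable_tail[measurable]: "tail M \<in> borel_measurable borel"
proof -
  have "mono (\<lambda>t. - tail M t)" by (auto simp: mono_def intro: tail_antimono)
  then have "(\<lambda>t. - tail M t) \<in> borel_measurable borel" by (rule borel_measurable_mono)
  then have "(\<lambda>t. - (- tail M t)) \<in> borel_measurable borel" by measurable
  then show ?thesis by simp
qed

lemma nn_integral_tail_layer_cake:
  assumes [measurable]: "h \<in> borel_measurable borel" and "\<And>t. 0 \<le> h t"
  shows "(\<integral>\<^sup>+ t. indicator {0..} t * ennreal (h t) * ennreal (tail M t) \<partial>lborel)
       = (\<integral>\<^sup>+ y. (\<integral>\<^sup>+ t. ennreal (if 0 \<le> t \<and> t < y then h t else 0) \<partial>lborel) \<partial>M)"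
proof -
  interpret prob_space M by (rule prob)
  interpret pair_sigma_finite lborel M proof qed
  have tail_eq: "ennreal (tail M t) = (\<integral>\<^sup>+ y. indicator {t<..} y \<partial>M)" for t
  proof -
    have "{t<..} \<in> sets M" using sets_eq_borel by simp
    then show ?thesis unfolding tail_def by (simp add: emeasure_eq_measure)
  qed
  have "(\<integral>\<^sup>+ t. indicator {0..} t * ennreal (h t) * ennreal (tail M t) \<partial>lborel)
     = (\<integral>\<^sup>+ t. \<integral>\<^sup>+ y. ennreal (if 0 \<le> t \<and> t < y then h t else 0) \<partial>M \<partial>lborel)"
  proof (intro nn_integral_cong)
    fix t
    show "indicator {0..} t * ennreal (h t) * ennreal (tail M t)
        = (\<integral>\<^sup>+ y. ennreal (if 0 \<le> t \<and> t < y then h t else 0) \<partial>M)"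
      unfolding tail_eq using sets_eq_borel
      by (subst nn_integral_cmult[symmetric])
         (auto intro!: nn_integral_cong borel_measurable_indicator simp: indicator_def)
  qed
  also have "\<dots> = (\<integral>\<^sup>+ y. \<integral>\<^sup>+ t. ennreal (if 0 \<le> t \<and> t < y then h t else 0) \<partial>lborel \<partial>M)"
  proof (rule Fubini'[symmetric])
    have sets: "sets (lborel \<Otimes>\<^sub>M M) = sets (borel \<Otimes>\<^sub>M borel)"
      using sets_eq_borel by (intro sets_pair_measure_cong) auto
    have "(\<lambda>(t, y). ennreal (if 0 \<le> t \<and> t < y then h t else 0)) \<in> borel_measurable (borel \<Otimes>\<^sub>M borel)"
      by measurable
    then show "(\<lambda>(t, y). ennreal (if 0 \<le> t \<and> t < y then h t else 0)) \<in> borel_measurable (lborel \<Otimes>\<^sub>M M)"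
      unfolding measurable_cong_sets[OF sets refl] .
  qed
  finally show ?thesis .
qed

lemma nn_integral_tail_eq_mean:
  assumes "integrable M (\<lambda>y. y)"
  shows "(\<integral>\<^sup>+ t. indicator {0..} t * ennreal (tail M t) \<partial>lborel) = ennreal (\<integral>y. y \<partial>M)"
proof -
  have "(\<integral>\<^sup>+ t. indicator {0..} t * ennreal (tail M t) \<partial>lborel)
      = (\<integral>\<^sup>+ t. indicator {0..} t * ennreal 1 * ennreal (tail M t) \<partial>lborel)"
    by simp
  also have "\<dots> = (\<integral>\<^sup>+ y. ennreal y \<partial>M)"
    using nn_integral_tail_layer_cake[of "\<lambda>_. 1"] nn_integral_indicator_Ico by simp
  also have "\<dots> = ennreal (\<integral>y. y \<partial>M)"
    by (rule nn_integral_eq_integral[OF assms AE_nonneg])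
  finally show ?thesis .
qed

lemma nn_integral_id_tail_eq_half_second_moment:
  assumes "integrable M (\<lambda>y. y\<^sup>2)"
  shows "(\<integral>\<^sup>+ t. indicator {0..} t * ennreal t * ennreal (tail M t) \<partial>lborel)
      = ennreal ((1/2) * \<integral>y. y\<^sup>2 \<partial>M)"
proof -
  have "(\<integral>\<^sup>+ t. indicator {0..} t * ennreal t * ennreal (tail M t) \<partial>lborel)
      = (\<integral>\<^sup>+ t. indicator {0..} t * ennreal (max 0 t) * ennreal (tail M t) \<partial>lborel)"
    by (intro nn_integral_cong) (auto simp: indicator_def max_def)
  also have "\<dots> = (\<integral>\<^sup>+ y. (\<integral>\<^sup>+ t. ennreal (if 0 \<le> t \<and> t < y then max 0 t else 0) \<partial>lborel) \<partial>M)"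
    by (rule nn_integral_tail_layer_cake) auto
  also have "\<dots> = (\<integral>\<^sup>+ y. (\<integral>\<^sup>+ t. ennreal (if 0 \<le> t \<and> t < y then t else 0) \<partial>lborel) \<partial>M)"
    by (intro nn_integral_cong) (auto intro!: nn_integral_cong simp: max_def)
  also have "\<dots> = (\<integral>\<^sup>+ y. ennreal (y\<^sup>2/2) \<partial>M)"
    by (intro nn_integral_cong_AE) (auto intro!: eventually_mono[OF AE_nonneg] simp: nn_integral_id_Ico)
  also have "\<dots> = ennreal (\<integral>y. y\<^sup>2/2 \<partial>M)"
    using assms by (intro nn_integral_eq_integral) auto
  finally show ?thesis by simp
qed

lemma nn_integral_powr_tail_le_moment:
  assumes a: "1 \<le> a"
  shows "(\<integral>\<^sup>+ t. indicator {0..} t * ennreal (t powr a) * ennreal (tail M t) \<partial>lborel)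
    \<le> (\<integral>\<^sup>+ y. ennreal (1 + \<bar>y\<bar> powr (2 * a)) \<partial>M)"
proof -
  have "(\<integral>\<^sup>+ t. indicator {0..} t * ennreal (t powr a) * ennreal (tail M t) \<partial>lborel)
     = (\<integral>\<^sup>+ y. (\<integral>\<^sup>+ t. ennreal (if 0 \<le> t \<and> t < y then t powr a else 0) \<partial>lborel) \<partial>M)"
    by (rule nn_integral_tail_layer_cake) (auto intro!: powr_real_measurable)
  also have "\<dots> \<le> (\<integral>\<^sup>+ y. ennreal (1 + \<bar>y\<bar> powr (2 * a)) \<partial>M)"
    using a by (intro nn_integral_mono order_trans[OF nn_integral_powr_Ico_le] ennreal_leI
        mult_powr_le_1_plus_powr) auto
  finally show ?thesis .
qed

end

definition tail_laplace :: "real measure \<Rightarrow> real \<Rightarrow> real" where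
  "tail_laplace M \<theta> =
     enn2real (\<integral>\<^sup>+ t. indicator {0..} t * ennreal (exp (- \<theta> * t)) * ennreal (tail M t) \<partial>lborel)"

lemma tail_laplace_nonneg: "0 \<le> tail_laplace M \<theta>"
  unfolding tail_laplace_def by simp

lemma abs_exp_minus_remainder_le:
  fixes x \<alpha> :: real
  assumes x: "0 \<le> x" and \<alpha>: "1 \<le> \<alpha>" "\<alpha> \<le> 2"
  shows "\<bar>1 - exp (- x) - x\<bar> \<le> x powr \<alpha>"
proof -
  have nonneg: "0 \<le> x - 1 + exp (- x)" using exp_ge_add_one_self[of "-x"] by simp
  have "1 / exp x \<le> 1 / (1 + x)"
    using x exp_ge_add_one_self[of x] by (intro divide_left_mono) auto
  then have "exp (- x) \<le> 1 / (1 + x)" by (simp add: exp_minus field_simps)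
  moreover have "x - 1 + 1 / (1 + x) = x\<^sup>2 / (1 + x)"
    using x by (simp add: field_simps power2_eq_square)
  ultimately have "x - 1 + exp (- x) \<le> x\<^sup>2 / (1 + x)" by linarith
  also have "\<dots> \<le> x powr \<alpha>"
  proof (cases "x \<le> 1")
    case True
    have "x\<^sup>2 / (1 + x) \<le> x powr 2"
      using x by (cases "x = 0") (auto simp: divide_le_eq mult_le_cancel_left1 powr_numeral)
    also have "\<dots> \<le> x powr \<alpha>" using True x \<alpha> by (intro powr_mono') auto
    finally show ?thesis .
  next
    case False
    have "x\<^sup>2 / (1 + x) \<le> x powr 1"
      using False by (simp add: divide_le_eq power2_eq_square algebra_simps)
    also have "\<dots> \<le> x powr \<alpha>" using False \<alpha> by (intro powr_mono) auto
    finally show ?thesis .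
  qed
  finally show ?thesis using nonneg by simp
qed

lemma borel_measurable_discounted_restriction:
  fixes \<theta> :: real and R :: "real \<Rightarrow> real"
  assumes R_loc: "\<And>T. T \<ge> 0 \<Longrightarrow> set_integrable lborel {0..T} R"
  defines "u \<equiv> \<lambda>t. if 0 \<le> t then exp (- \<theta> * t) * R t else 0"
  shows "u \<in> borel_measurable borel"
proof (rule borel_measurable_LIMSEQ_real[where u="\<lambda>i t. exp (- \<theta> * t) * (indicator {0..real i} t * R t)"])
  fix t :: real
  obtain N where "t \<le> real N" using real_arch_simple by blast
  then have "\<forall>\<^sub>F i in sequentially. exp (- \<theta> * t) * (indicator {0..real i} t * R t) = u t"
    by (auto simp: eventually_sequentially u_def indicator_def intro!: exI[of _ N])
  then show "(\<lambda>i. exp (- \<theta> * t) * (indicator {0..real i} t * R t)) \<longlonglongrightarrow> u t"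
    by (rule tendsto_eventually)
next
  fix i :: nat
  have "(\<lambda>t. indicator {0..real i} t * R t) \<in> borel_measurable borel"
    using borel_measurable_integrable[OF R_loc[of "real i", unfolded set_integrable_def]] by simp
  then show "(\<lambda>t. exp (- \<theta> * t) * (indicator {0..real i} t * R t)) \<in> borel_measurable borel"
    by measurable
qed

lemma nn_integral_discounted_restriction_finite:
  fixes \<theta> :: real and R :: "real \<Rightarrow> real"
  assumes R_loc: "\<And>T. T \<ge> 0 \<Longrightarrow> set_integrable lborel {0..T} R" and \<theta>: "0 \<le> \<theta>"
  defines "u \<equiv> \<lambda>t. if 0 \<le> t then exp (- \<theta> * t) * R t else 0"
  shows "(\<integral>\<^sup>+t. indicator {..x} t * ennreal \<bar>u t\<bar> \<partial>lborel) < \<infinity>"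
proof -
  have "(\<integral>\<^sup>+t. indicator {..x} t * ennreal \<bar>u t\<bar> \<partial>lborel)
      \<le> (\<integral>\<^sup>+t. ennreal (norm (indicator {0..max 0 x} t *\<^sub>R R t)) \<partial>lborel)"
  proof (intro nn_integral_mono)
    fix t :: real
    have "0 \<le> t \<Longrightarrow> \<bar>exp (- \<theta> * t) * R t\<bar> \<le> 1 * \<bar>R t\<bar>"
      unfolding abs_mult using \<theta> by (intro mult_right_mono) auto
    then show "indicator {..x} t * ennreal \<bar>u t\<bar> \<le> ennreal (norm (indicator {0..max 0 x} t *\<^sub>R R t))"
      by (auto simp: u_def indicator_def intro!: ennreal_leI)
  qed
  also have "\<dots> < \<infinity>"
    using R_loc[of "max 0 x"] unfolding set_integrable_def integrable_iff_bounded by simp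
  finally show ?thesis .
qed

context nonneg_real_distribution
begin

lemma nn_integral_discounted_tail:
  assumes int1: "integrable M (\<lambda>y. y)" and \<theta>: "0 \<le> \<theta>"
  shows "(\<integral>\<^sup>+ t. indicator {0..} t * ennreal (exp (- \<theta> * t)) * ennreal (tail M t) \<partial>lborel)
    = ennreal (tail_laplace M \<theta>)"
proof -
  have "(\<integral>\<^sup>+ t. indicator {0..} t * ennreal (exp (- \<theta> * t)) * ennreal (tail M t) \<partial>lborel)
      \<le> (\<integral>\<^sup>+ t. indicator {0..} t * ennreal (tail M t) \<partial>lborel)"
  proof (intro nn_integral_mono)
    fix t :: real
    have "0 \<le> t \<Longrightarrow> ennreal (exp (- \<theta> * t)) * ennreal (tail M t) \<le> 1 * ennreal (tail M t)"
      using \<theta> by (intro mult_right_mono ennreal_leI) auto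
    then show "indicator {0..} t * ennreal (exp (- \<theta> * t)) * ennreal (tail M t)
      \<le> indicator {0..} t * ennreal (tail M t)"
      by (cases "0 \<le> t") auto
  qed
  also have "\<dots> < \<infinity>" using nn_integral_tail_eq_mean[OF int1] by simp
  finally show ?thesis unfolding tail_laplace_def by (simp add: ennreal_enn2real_if)
qed

lemma tail_laplace_expansion:
  assumes int1: "integrable M (\<lambda>y. y)" and int2: "integrable M (\<lambda>y. y\<^sup>2)"
    and \<theta>: "0 \<le> \<theta>" and \<alpha>: "1 \<le> \<alpha>" "\<alpha> \<le> 2" and D: "0 \<le> D"
    and moment: "(\<integral>\<^sup>+ t. indicator {0..} t * ennreal (t powr \<alpha>) * ennreal (tail M t) \<partial>lborel) \<le> ennreal D"
  shows "\<bar>(\<integral>y. y \<partial>M) - tail_laplace M \<theta> - \<theta> * ((1/2) * (\<integral>y. y\<^sup>2 \<partial>M))\<bar>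
      \<le> \<theta> powr \<alpha> * D"
proof -
  define fa where "fa t = indicator {0..} t * tail M t" for t :: real
  define fb where "fb t = indicator {0..} t * t * tail M t" for t :: real
  define fe where "fe t = indicator {0..} t * exp (- \<theta> * t) * tail M t" for t :: real
  define fd where "fd t = indicator {0..} t * t powr \<alpha> * tail M t" for t :: real
  have meas[measurable]: "fa \<in> borel_measurable borel" "fb \<in> borel_measurable borel"
    "fe \<in> borel_measurable borel" "fd \<in> borel_measurable borel"
    unfolding fa_def fb_def fe_def fd_def by measurable
  have nonneg: "0 \<le> fa t" "0 \<le> fb t" "0 \<le> fe t" "0 \<le> fd t" for t
    unfolding fa_def fb_def fe_def fd_def using tail_nonneg[of M t] by (auto simp: indicator_def)
  have mean: "integrable lborel fa \<and> (\<integral>t. fa t \<partial>lborel) = (\<integral>y. y \<partial>M)"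
  proof (rule nn_integral_eq_integrable[THEN iffD1])
    show "(\<integral>\<^sup>+ t. ennreal (fa t) \<partial>lborel) = ennreal (\<integral>y. y \<partial>M)"
      using nn_integral_tail_eq_mean[OF int1] unfolding fa_def
      by (subst nn_integral_cong[where v="\<lambda>t. indicator {0..} t * ennreal (tail M t)"])
         (auto simp: indicator_def)
    show "0 \<le> (\<integral>y. y \<partial>M)" using AE_nonneg by (simp add: integral_nonneg_AE)
  qed (use meas nonneg in \<open>auto intro!: AE_I2\<close>)
  have second: "integrable lborel fb \<and> (\<integral>t. fb t \<partial>lborel) = (1/2) * (\<integral>y. y\<^sup>2 \<partial>M)"
  proof (rule nn_integral_eq_integrable[THEN iffD1])
    show "(\<integral>\<^sup>+ t. ennreal (fb t) \<partial>lborel) = ennreal ((1/2) * (\<integral>y. y\<^sup>2 \<partial>M))"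
      using nn_integral_id_tail_eq_half_second_moment[OF int2] unfolding fb_def
      by (subst nn_integral_cong[where v="\<lambda>t. indicator {0..} t * ennreal t * ennreal (tail M t)"])
         (auto simp: indicator_def ennreal_mult tail_nonneg)
  qed (use meas nonneg in \<open>auto intro!: AE_I2\<close>)
  have laplace: "integrable lborel fe \<and> (\<integral>t. fe t \<partial>lborel) = tail_laplace M \<theta>"
  proof (rule nn_integral_eq_integrable[THEN iffD1])
    show "(\<integral>\<^sup>+ t. ennreal (fe t) \<partial>lborel) = ennreal (tail_laplace M \<theta>)"
      using nn_integral_discounted_tail[OF int1 \<theta>] unfolding fe_def
      by (subst nn_integral_cong[where v="\<lambda>t. indicator {0..} t * ennreal (exp (- \<theta> * t)) * ennreal (tail M t)"])
         (auto simp: indicator_def ennreal_mult tail_nonneg)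
  qed (use meas nonneg in \<open>auto intro!: AE_I2 simp: tail_laplace_def\<close>)
  have nn_d: "(\<integral>\<^sup>+ t. ennreal (fd t) \<partial>lborel) \<le> ennreal D"
    using moment unfolding fd_def
    by (subst nn_integral_cong[where v="\<lambda>t. indicator {0..} t * ennreal (t powr \<alpha>) * ennreal (tail M t)"])
       (auto simp: indicator_def ennreal_mult tail_nonneg)
  have int_d: "integrable lborel fd"
    using nn_d nonneg by (intro integrableI_bounded) (auto intro: le_less_trans)
  have integral_d: "(\<integral>t. fd t \<partial>lborel) \<le> D"
    using nn_d nn_integral_eq_integral[OF int_d] nonneg D by (simp add: integral_nonneg_AE)
  have pointwise: "\<bar>fa t - fe t - \<theta> * fb t\<bar> \<le> \<theta> powr \<alpha> * fd t" for t
  proof (cases "0 \<le> t")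
    case True
    have "fa t - fe t - \<theta> * fb t = tail M t * (1 - exp (- (\<theta> * t)) - \<theta> * t)"
      using True by (simp add: fa_def fe_def fb_def algebra_simps)
    then have "\<bar>fa t - fe t - \<theta> * fb t\<bar> = tail M t * \<bar>1 - exp (- (\<theta> * t)) - \<theta> * t\<bar>"
      using tail_nonneg[of M t] by (simp add: abs_mult)
    also have "\<dots> \<le> tail M t * (\<theta> * t) powr \<alpha>"
      using abs_exp_minus_remainder_le[of "\<theta> * t" \<alpha>] True \<theta> \<alpha> tail_nonneg[of M t] by (simp add: mult_left_mono)
    also have "\<dots> = \<theta> powr \<alpha> * fd t"
      using True \<theta> by (simp add: fd_def powr_mult)
    finally show ?thesis .
  qed (simp add: fa_def fb_def fe_def fd_def)
  have "(\<integral>y. y \<partial>M) - tail_laplace M \<theta> - \<theta> * ((1/2) * (\<integral>y. y\<^sup>2 \<partial>M))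
      = (\<integral>t. fa t - fe t - \<theta> * fb t \<partial>lborel)"
    using mean second laplace by simp
  also have "\<bar>\<dots>\<bar> \<le> (\<integral>t. \<theta> powr \<alpha> * fd t \<partial>lborel)"
    using mean second laplace int_d pointwise by (intro integral_abs_bound_integral) auto
  also have "\<dots> \<le> \<theta> powr \<alpha> * D"
    using integral_d by (simp add: mult_left_mono)
  finally show ?thesis .
qed

lemma discounted_renewal_equation:
  fixes c \<theta> :: real and R :: "real \<Rightarrow> real"
  assumes R_eq: "\<And>t. t \<ge> 0 \<Longrightarrow> R t = c * tail M t + c * (LINT s:{0..t}|lborel. R (t - s) * tail M s)"
  defines "g \<equiv> \<lambda>t. if 0 \<le> t then exp (- \<theta> * t) * (c * tail M t) else 0"
    and "u \<equiv> \<lambda>t. if 0 \<le> t then exp (- \<theta> * t) * R t else 0"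
  shows "u t = g t + (\<integral>s. g s * u (t - s) \<partial>lborel)"
proof (cases "0 \<le> t")
  case False
  then have "(\<lambda>s. g s * u (t - s)) = (\<lambda>s. 0)" by (auto simp: g_def u_def fun_eq_iff)
  then show ?thesis using False by (simp add: g_def u_def)
next
  case True
  have "u t = g t + exp (- \<theta> * t) * c * (LINT s:{0..t}|lborel. R (t - s) * tail M s)"
    using R_eq[OF True] True unfolding u_def g_def by (simp add: algebra_simps)
  also have "exp (- \<theta> * t) * c * (LINT s:{0..t}|lborel. R (t - s) * tail M s)
      = (\<integral>s. exp (- \<theta> * t) * c * (indicator {0..t} s *\<^sub>R (R (t - s) * tail M s)) \<partial>lborel)"
    unfolding set_lebesgue_integral_def by (rule integral_mult_right_zero[symmetric])
  also have "\<dots> = (\<integral>s. g s * u (t - s) \<partial>lborel)"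
  proof (intro Bochner_Integration.integral_cong refl)
    fix s
    have "exp (- \<theta> * t) = exp (- \<theta> * s) * exp (- \<theta> * (t - s))"
      by (simp add: mult_exp_exp algebra_simps)
    then show "exp (- \<theta> * t) * c * (indicator {0..t} s *\<^sub>R (R (t - s) * tail M s)) = g s * u (t - s)"
      by (auto simp: g_def u_def indicator_def mult_ac simp del: mult_exp_exp)
  qed
  finally show ?thesis .
qed

lemma discounted_renewal_subcritical:
  fixes c \<theta> :: real and R :: "real \<Rightarrow> real"
  assumes int1: "integrable M (\<lambda>y. y)" and c: "0 < c" and \<theta>: "0 \<le> \<theta>"
    and R_loc: "\<And>T. T \<ge> 0 \<Longrightarrow> set_integrable lborel {0..T} R"
    and R_eq: "\<And>t. t \<ge> 0 \<Longrightarrow> R t = c * tail M t + c * (LINT s:{0..t}|lborel. R (t - s) * tail M s)"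
    and subcritical: "c * tail_laplace M \<theta> < 1"
  shows "subcritical_renewal (\<lambda>t. if 0 \<le> t then exp (- \<theta> * t) * (c * tail M t) else 0)
    (\<lambda>t. if 0 \<le> t then exp (- \<theta> * t) * R t else 0) c (c * tail_laplace M \<theta>)"
proof
  let ?g = "\<lambda>t. if 0 \<le> t then exp (- \<theta> * t) * (c * tail M t) else 0"
  have exp_le_1: "exp (- \<theta> * t) \<le> 1" if "0 \<le> t" for t
    using that \<theta> by simp
  show "?g \<in> borel_measurable borel" by measurable
  show "0 \<le> ?g x" for x using c tail_nonneg[of M x] by simp
  show "?g x \<le> c" for x
  proof (cases "0 \<le> x")
    case True
    have "exp (- \<theta> * x) * (c * tail M x) \<le> 1 * (c * 1)"
      using exp_le_1[OF True] tail_nonneg[of M x] tail_le_1[of x] c by (intro mult_mono) auto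
    then show ?thesis using True by simp
  qed (use c in simp)
  show "x < 0 \<Longrightarrow> ?g x = 0" for x by simp
  show "?g y \<le> ?g x" if "0 \<le> x" "x \<le> y" for x y
  proof -
    have "exp (- \<theta> * y) \<le> exp (- \<theta> * x)" using that \<theta> by (simp add: mult_left_mono)
    moreover have "c * tail M y \<le> c * tail M x" using tail_antimono[OF that(2)] c by simp
    ultimately show ?thesis
      using that c tail_nonneg[of M y] by (simp add: mult_mono)
  qed
  have "(\<integral>\<^sup>+x. ennreal (?g x) \<partial>lborel)
      = (\<integral>\<^sup>+x. ennreal c * (indicator {0..} x * ennreal (exp (- \<theta> * x)) * ennreal (tail M x)) \<partial>lborel)"
    using c tail_nonneg by (intro nn_integral_cong) (auto simp: indicator_def ennreal_mult mult_ac)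
  also have "\<dots> = ennreal c * ennreal (tail_laplace M \<theta>)"
    unfolding nn_integral_discounted_tail[OF int1 \<theta>, symmetric] by (rule nn_integral_cmult) measurable
  also have "\<dots> = ennreal (c * tail_laplace M \<theta>)" using c tail_laplace_nonneg by (simp add: ennreal_mult)
  finally show "(\<integral>\<^sup>+x. ennreal (?g x) \<partial>lborel) = ennreal (c * tail_laplace M \<theta>)" .
  show "c * tail_laplace M \<theta> < 1" by (rule subcritical)
  show "0 \<le> c * tail_laplace M \<theta>" using c tail_laplace_nonneg by simp
  show "0 < c" by (rule c)
  show "(\<lambda>t. if 0 \<le> t then exp (- \<theta> * t) * R t else 0) \<in> borel_measurable borel"
    using R_loc by (rule borel_measurable_discounted_restriction)
  show "x < 0 \<Longrightarrow> (if 0 \<le> x then exp (- \<theta> * x) * R x else 0) = 0" for x by simp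
  show "(\<integral>\<^sup>+t. indicator {..x} t * ennreal \<bar>if 0 \<le> t then exp (- \<theta> * t) * R t else 0\<bar> \<partial>lborel)
      < \<infinity>" for x
    using R_loc \<theta> by (rule nn_integral_discounted_restriction_finite)
  show "(if 0 \<le> t then exp (- \<theta> * t) * R t else 0)
    = ?g t + (\<integral>s. ?g s * (if 0 \<le> t - s then exp (- \<theta> * (t - s)) * R (t - s) else 0) \<partial>lborel)" for t
    using R_eq by (rule discounted_renewal_equation)
qed

end

lemma (in nonneg_real_distribution) rescaled_discounted_renewal:
  fixes c a \<beta> :: real and R :: "real \<Rightarrow> real"
  assumes int1: "integrable M (\<lambda>y. y)" and c: "0 < c" and a: "0 < a" and \<beta>: "0 \<le> \<beta>"
    and R_loc: "\<And>T. T \<ge> 0 \<Longrightarrow> set_integrable lborel {0..T} R"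
    and R_eq: "\<And>t. t \<ge> 0 \<Longrightarrow> R t = c * tail M t + c * (LINT s:{0..t}|lborel. R (t - s) * tail M s)"
    and subcritical: "c * tail_laplace M (\<beta> / a) < 1"
  defines "G \<equiv> c * tail_laplace M (\<beta> / a)"
  shows "set_integrable lborel {0..} (\<lambda>t. exp (- \<beta> * (a * t) / a) * R (a * t))"
    and "(LINT t:{0..}|lborel. exp (- \<beta> * (a * t) / a) * R (a * t)) = G / (1 - G) / a"
    and "\<And>\<kappa>. \<kappa> \<ge> 1 \<Longrightarrow> (\<integral>\<^sup>+ t. ennreal (\<bar>exp (- \<beta> * (a * t) / a) * R (a * t)\<bar> powr \<kappa> * indicator {0..} t) \<partial>lborel)
        \<le> ennreal ((7 * c) powr (\<kappa> - 1) * (G / (1 - G) / a))"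
proof -
  define u where "u = (\<lambda>t. if 0 \<le> t then exp (- (\<beta> / a) * t) * R t else 0)"
  interpret subcritical_renewal "\<lambda>t. if 0 \<le> t then exp (- (\<beta> / a) * t) * (c * tail M t) else 0" u c G
    unfolding G_def u_def using a \<beta> subcritical
    by (intro discounted_renewal_subcritical int1 c R_loc R_eq) auto
  have restricted: "(\<lambda>t. indicator {0..} t *\<^sub>R (exp (- \<beta> * (a * t) / a) * R (a * t))) = (\<lambda>t. u (a * t))"
    using a by (auto simp: u_def indicator_def zero_le_mult_iff)
  show "set_integrable lborel {0..} (\<lambda>t. exp (- \<beta> * (a * t) / a) * R (a * t))"
    unfolding set_integrable_def restricted by (rule rescaled_solution_integrable[OF a])
  show "(LINT t:{0..}|lborel. exp (- \<beta> * (a * t) / a) * R (a * t)) = G / (1 - G) / a"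
    unfolding set_lebesgue_integral_def restricted by (rule integral_rescaled_solution[OF a])
  show "(\<integral>\<^sup>+ t. ennreal (\<bar>exp (- \<beta> * (a * t) / a) * R (a * t)\<bar> powr \<kappa> * indicator {0..} t) \<partial>lborel)
      \<le> ennreal ((7 * c) powr (\<kappa> - 1) * (G / (1 - G) / a))" if "\<kappa> \<ge> 1" for \<kappa>
  proof -
    have "\<bar>exp (- \<beta> * (a * t) / a) * R (a * t)\<bar> powr \<kappa> * indicator {0..} t = \<bar>u (a * t)\<bar> powr \<kappa>" for t
      using fun_cong[OF restricted, of t] by (auto simp: indicator_def)
    then show ?thesis using nn_integral_rescaled_solution_powr_le[OF a that] by simp
  qed
qed

lemma (in nonneg_real_distribution) dominated_tail_powr_moment_bound:
  assumes a: "1 \<le> a" and moment: "(\<integral>\<^sup>+ y. ennreal (\<bar>y\<bar> powr (2 * a)) \<partial>M) < \<infinity>" and C0: "0 \<le> C0"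
  obtains D where "0 \<le> D"
    and "\<And>N. (\<And>t. t \<ge> 0 \<Longrightarrow> tail N t \<le> C0 * tail M t) \<Longrightarrow>
      (\<integral>\<^sup>+ t. indicator {0..} t * ennreal (t powr a) * ennreal (tail N t) \<partial>lborel) \<le> ennreal D"
proof
  let ?I = "\<lambda>N. \<integral>\<^sup>+ t. indicator {0..} t * ennreal (t powr a) * ennreal (tail N t) \<partial>lborel"
  have "?I M \<le> (\<integral>\<^sup>+ y. 1 + ennreal (\<bar>y\<bar> powr (2 * a)) \<partial>M)"
    using nn_integral_powr_tail_le_moment[OF a] by (simp add: ennreal_plus)
  also have "\<dots> = (\<integral>\<^sup>+ y. 1 \<partial>M) + (\<integral>\<^sup>+ y. ennreal (\<bar>y\<bar> powr (2 * a)) \<partial>M)"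
    using sets_eq_borel by (intro nn_integral_add) (auto simp: measurable_cong_sets[OF sets_eq_borel refl])
  also have "\<dots> < \<infinity>"
    using moment prob_space.emeasure_space_1[OF prob] by simp
  finally have finite: "?I M < \<infinity>" .
  show "0 \<le> C0 * enn2real (?I M)" using C0 by simp
  fix N assume dominated: "\<And>t. t \<ge> 0 \<Longrightarrow> tail N t \<le> C0 * tail M t"
  have "?I N \<le> (\<integral>\<^sup>+ t. ennreal C0 * (indicator {0..} t * ennreal (t powr a) * ennreal (tail M t)) \<partial>lborel)"
  proof (intro nn_integral_mono)
    fix t :: real
    show "indicator {0..} t * ennreal (t powr a) * ennreal (tail N t)
      \<le> ennreal C0 * (indicator {0..} t * ennreal (t powr a) * ennreal (tail M t))"
    proof (cases "0 \<le> t")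
      case True
      then have "ennreal (tail N t) \<le> ennreal C0 * ennreal (tail M t)"
        using dominated[of t] C0 tail_nonneg[of M t] by (simp add: ennreal_mult[symmetric] ennreal_leI)
      then have "ennreal (t powr a) * ennreal (tail N t) \<le> ennreal (t powr a) * (ennreal C0 * ennreal (tail M t))"
        by (rule mult_left_mono) simp
      then show ?thesis using True by (simp add: mult_ac)
    qed simp
  qed
  also have "\<dots> = ennreal C0 * ?I M"
    by (rule nn_integral_cmult) (auto intro!: powr_real_measurable)
  also have "\<dots> = ennreal (C0 * enn2real (?I M))"
    using finite C0 by (simp add: ennreal_mult ennreal_enn2real_if)
  finally show "?I N \<le> ennreal (C0 * enn2real (?I M))" .
qed

lemma tendsto_0_if_scaled_tendsto:
  fixes \<gamma> f :: "nat \<Rightarrow> real"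
  assumes \<gamma>: "filterlim \<gamma> at_top sequentially" and scaled: "(\<lambda>n. \<gamma> n * f n) \<longlonglongrightarrow> L"
  shows "f \<longlonglongrightarrow> 0"
proof -
  have "(\<lambda>n. \<gamma> n * f n / \<gamma> n) \<longlonglongrightarrow> 0"
    using scaled filterlim_mono[OF \<gamma> at_top_le_at_infinity order_refl] by (rule tendsto_divide_0)
  moreover have "\<forall>\<^sub>F n in sequentially. \<gamma> n * f n / \<gamma> n = f n"
    using \<gamma> unfolding filterlim_at_top_dense by (auto elim!: allE[of _ 0] eventually_mono)
  ultimately show ?thesis by (rule Lim_transform_eventually)
qed

lemma renewal_gap_tendsto:
  fixes \<gamma> lam mn eta sig A :: "nat \<Rightarrow> real"
  assumes \<gamma>: "filterlim \<gamma> at_top sequentially"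
    and lam: "lam \<longlonglongrightarrow> lambda" and eta: "eta \<longlonglongrightarrow> \<eta>" and sig: "sig \<longlonglongrightarrow> \<sigma>"
    and b: "(\<lambda>n. \<gamma> n * (1 - lam n * eta n)) \<longlonglongrightarrow> b"
    and m: "(\<lambda>n. \<gamma> n * (1 - mn n)) \<longlonglongrightarrow> m"
    and \<alpha>: "1 < \<alpha>" and \<beta>: "0 \<le> \<beta>"
    and expansion: "\<forall>\<^sub>F n in sequentially. \<bar>eta n - A n - \<beta> / \<gamma> n * sig n\<bar>
        \<le> (\<beta> / \<gamma> n) powr \<alpha> * D"
  shows "(\<lambda>n. \<gamma> n * (1 - lam n * mn n * A n)) \<longlonglongrightarrow> b + m + \<beta> * \<sigma> * lambda"
proof -
  have \<gamma>_pos: "\<forall>\<^sub>F n in sequentially. 0 < \<gamma> n"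
    using \<gamma> unfolding filterlim_at_top_dense by blast
  have "(\<lambda>n. 1 - (1 - lam n * eta n)) \<longlonglongrightarrow> 1 - 0"
    by (intro tendsto_intros tendsto_0_if_scaled_tendsto[OF \<gamma> b])
  then have lam_eta: "(\<lambda>n. lam n * eta n) \<longlonglongrightarrow> 1" by simp
  have "(\<lambda>n. 1 - (1 - mn n)) \<longlonglongrightarrow> 1 - 0"
    by (intro tendsto_intros tendsto_0_if_scaled_tendsto[OF \<gamma> m])
  then have mn: "mn \<longlonglongrightarrow> 1" by simp
  have "(\<lambda>n. \<gamma> n * (eta n - A n) - \<beta> * sig n) \<longlonglongrightarrow> 0"
  proof (rule Lim_null_comparison)
    show "\<forall>\<^sub>F n in sequentially. norm (\<gamma> n * (eta n - A n) - \<beta> * sig n)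
        \<le> \<beta> powr \<alpha> * \<gamma> n powr (1 - \<alpha>) * D"
      using \<gamma>_pos expansion
    proof eventually_elim
      case (elim n)
      have "\<gamma> n * (eta n - A n) - \<beta> * sig n = \<gamma> n * (eta n - A n - \<beta> / \<gamma> n * sig n)"
        using elim(1) by (simp add: field_simps)
      then have "norm (\<gamma> n * (eta n - A n) - \<beta> * sig n) = \<gamma> n * \<bar>eta n - A n - \<beta> / \<gamma> n * sig n\<bar>"
        using elim(1) by (simp add: abs_mult)
      also have "\<dots> \<le> \<gamma> n * ((\<beta> / \<gamma> n) powr \<alpha> * D)"
        using elim by (intro mult_left_mono) auto
      also have "\<dots> = \<beta> powr \<alpha> * \<gamma> n powr (1 - \<alpha>) * D"
        using elim(1) \<beta> by (simp add: powr_divide powr_diff)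
      finally show ?case .
    qed
    show "(\<lambda>n. \<beta> powr \<alpha> * \<gamma> n powr (1 - \<alpha>) * D) \<longlonglongrightarrow> 0"
      using \<alpha> tendsto_neg_powr[OF _ \<gamma>, of "1 - \<alpha>"] by (auto intro!: tendsto_mult_right_zero tendsto_mult_left_zero)
  qed
  then have discount: "(\<lambda>n. \<gamma> n * (eta n - A n)) \<longlonglongrightarrow> \<beta> * \<sigma>"
    using tendsto_add[OF _ tendsto_mult_left[OF sig, of \<beta>]] by fastforce
  have "(\<lambda>n. \<gamma> n * (1 - lam n * eta n) + lam n * eta n * (\<gamma> n * (1 - mn n))
      + lam n * mn n * (\<gamma> n * (eta n - A n))) \<longlonglongrightarrow> b + 1 * m + lambda * 1 * (\<beta> * \<sigma>)"
    by (intro tendsto_intros b m lam mn lam_eta discount)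
  then show ?thesis by (simp add: algebra_simps)
qed

lemma renewal_mass_ratio_tendsto:
  fixes \<gamma> G :: "nat \<Rightarrow> real"
  assumes \<gamma>: "filterlim \<gamma> at_top sequentially" and gap: "(\<lambda>n. \<gamma> n * (1 - G n)) \<longlonglongrightarrow> c" and c: "0 < c"
  shows "(\<lambda>n. G n / (1 - G n) / \<gamma> n) \<longlonglongrightarrow> 1 / c"
proof -
  have "(\<lambda>n. 1 - (1 - G n)) \<longlonglongrightarrow> 1 - 0"
    by (intro tendsto_intros tendsto_0_if_scaled_tendsto[OF \<gamma> gap])
  then have "(\<lambda>n. G n / (\<gamma> n * (1 - G n))) \<longlonglongrightarrow> 1 / c"
    using c by (intro tendsto_divide gap) auto
  then show ?thesis by (simp add: mult.commute)
qed

lemma uniform_powr_bound_eventually: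
  fixes K L :: "nat \<Rightarrow> real" and F :: "nat \<Rightarrow> real \<Rightarrow> ennreal"
  assumes K: "K \<longlonglongrightarrow> k" and L: "L \<longlonglongrightarrow> l"
    and bound: "\<forall>\<^sub>F n in sequentially. 0 \<le> K n \<and> 0 \<le> L n \<and>
      (\<forall>\<kappa>\<ge>1. F n \<kappa> \<le> ennreal (K n powr (\<kappa> - 1) * L n))"
  shows "\<exists>C>0. \<exists>n0::nat. n0 \<ge> 1 \<and> (\<forall>n>n0. \<forall>\<kappa>::real. \<kappa> \<ge> 1 \<longrightarrow> F n \<kappa> \<le> ennreal (C powr \<kappa>))"
proof -
  define C where "C = max (\<bar>k\<bar> + 1) (\<bar>l\<bar> + 1)"
  have "\<forall>\<^sub>F n in sequentially. K n < \<bar>k\<bar> + 1" "\<forall>\<^sub>F n in sequentially. L n < \<bar>l\<bar> + 1"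
    using K L by (auto intro: order_tendstoD)
  with bound have "\<forall>\<^sub>F n in sequentially. 0 \<le> K n \<and> K n \<le> C \<and> 0 \<le> L n \<and> L n \<le> C \<and>
      (\<forall>\<kappa>\<ge>1. F n \<kappa> \<le> ennreal (K n powr (\<kappa> - 1) * L n))"
    unfolding C_def by eventually_elim auto
  then obtain N where N: "\<And>n. n \<ge> N \<Longrightarrow> 0 \<le> K n \<and> K n \<le> C \<and> 0 \<le> L n \<and> L n \<le> C \<and>
      (\<forall>\<kappa>\<ge>1. F n \<kappa> \<le> ennreal (K n powr (\<kappa> - 1) * L n))"
    unfolding eventually_sequentially by blast
  have "F n \<kappa> \<le> ennreal (C powr \<kappa>)" if "n > max N 1" "\<kappa> \<ge> 1" for n \<kappa>
  proof -
    have "K n powr (\<kappa> - 1) * L n \<le> C powr (\<kappa> - 1) * C"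
      using N[of n] that by (intro mult_mono powr_mono2) auto
    also have "\<dots> = C powr \<kappa>"
      using powr_add[of C "\<kappa> - 1" 1] by (simp add: C_def)
    finally show ?thesis
      using N[of n] that by (auto intro: order_trans ennreal_leI)
  qed
  moreover have "C > 0" by (simp add: C_def)
  ultimately show ?thesis by (intro exI[of _ C] conjI exI[of _ "max N 1"]) auto
qed

theorem proposition5p3:
  fixes lam :: "nat \<Rightarrow> real" and Lam :: "nat \<Rightarrow> real measure"
    and p q :: "nat \<Rightarrow> nat \<Rightarrow> real" and \<gamma> :: "nat \<Rightarrow> real"
    and \<gamma>star lambda \<eta> \<sigma> b m \<alpha> \<beta> :: real
    and \<psi> \<phi> :: "real \<Rightarrow> real"
    and R :: "nat \<Rightarrow> real \<Rightarrow> real"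
  defines "\<eta>n \<equiv> (\<lambda>n. integral\<^sup>L (Lam n) (\<lambda>y. y))"
    and "\<sigma>n \<equiv> (\<lambda>n. (1/2) * integral\<^sup>L (Lam n) (\<lambda>y. y\<^sup>2))"
    and "mn \<equiv> (\<lambda>n. (\<Sum>k. real k * p n k))"
  assumes lam_pos: "\<And>n. n \<ge> 1 \<Longrightarrow> lam n > 0"
    and Lam_prob: "\<And>n. n \<ge> 1 \<Longrightarrow> prob_space (Lam n)"
    and Lam_sets: "\<And>n. n \<ge> 1 \<Longrightarrow> sets (Lam n) = sets borel"
    and Lam_supp: "\<And>n. n \<ge> 1 \<Longrightarrow> measure (Lam n) {0..} = 1"
    and Lam_int1: "\<And>n. n \<ge> 1 \<Longrightarrow> integrable (Lam n) (\<lambda>y. y)"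
    and Lam_int2: "\<And>n. n \<ge> 1 \<Longrightarrow> integrable (Lam n) (\<lambda>y. y\<^sup>2)"
    and p_nonneg: "\<And>n k. n \<ge> 1 \<Longrightarrow> p n k \<ge> 0"
    and p_zero: "\<And>n. n \<ge> 1 \<Longrightarrow> p n 0 = 0"
    and p_sums: "\<And>n. n \<ge> 1 \<Longrightarrow> p n sums 1"
    and q_nonneg: "\<And>n k. n \<ge> 1 \<Longrightarrow> q n k \<ge> 0"
    and q_zero: "\<And>n. n \<ge> 1 \<Longrightarrow> q n 0 = 0"
    and q_sums: "\<And>n. n \<ge> 1 \<Longrightarrow> q n sums 1"
    and m_fin: "\<And>n. n \<ge> 1 \<Longrightarrow> summable (\<lambda>k. real k * p n k)"
    and gamma_pos: "\<And>n. n \<ge> 1 \<Longrightarrow> \<gamma> n > 0"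
    and gamma_top: "filterlim \<gamma> at_top sequentially"
    and gamma_ratio: "(\<lambda>n. \<gamma> n / real n) \<longlonglongrightarrow> \<gamma>star" and gamma_star: "\<gamma>star \<ge> 0"
    and C1_lam: "lam \<longlonglongrightarrow> lambda" "lambda > 0"
    and C1_eta: "\<eta>n \<longlonglongrightarrow> \<eta>" "\<eta> > 0"
    and C1_sigma: "\<sigma>n \<longlonglongrightarrow> \<sigma>" "\<sigma> > 0"
    and C1_b: "(\<lambda>n. \<gamma> n * (1 - lam n * \<eta>n n)) \<longlonglongrightarrow> b"
    and C1_psi: "\<And>T. T \<ge> 0 \<Longrightarrow>
         uniform_limit {0..T} (\<lambda>n. psi_n (q n) (\<gamma> n) n) \<psi> sequentially"
    and C1_phi_lip: "\<And>T. T \<ge> 0 \<Longrightarrow> \<exists>L. \<forall>n\<ge>1.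
         lipschitz_on L {0..min T (real n)} (phi_n (p n) (\<gamma> n) n)"
    and C1_phi_lim: "\<And>T. T \<ge> 0 \<Longrightarrow>
         uniform_limit {0..T} (\<lambda>n. phi_n (p n) (\<gamma> n) n) \<phi> sequentially"
    and C1_phi_cont: "continuous_on {0..} \<phi>"
    and m_def: "(\<lambda>n. \<gamma> n * (1 - mn n)) \<longlonglongrightarrow> m"
    and alpha: "1 < \<alpha>" "\<alpha> < 2"
    and C2_1a: "\<exists>C (k0::nat). C > 0 \<and> k0 > 0 \<and> (\<forall>n\<ge>1.
         summable (\<lambda>k. if k \<ge> k0 then (real k / real n) powr \<alpha> * p n k else 0) \<and>
         summable (\<lambda>k. real k powr \<alpha> * q n k) \<and>
         real n * \<gamma> n * (\<Sum>k. if k \<ge> k0 then (real k / real n) powr \<alpha> * p n k else 0)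
           + (\<Sum>k. real k powr \<alpha> * q n k) \<le> C)"
    and C2_1b: "(\<lambda>k1. limsup (\<lambda>n. ereal (\<gamma> n *
         (\<Sum>k. if k \<ge> k1 then real k * p n k else 0)))) \<longlonglongrightarrow> 0"
    and C2_2: "\<exists>C0 Ls. C0 > 0 \<and> prob_space Ls \<and> sets Ls = sets borel
         \<and> measure Ls {0..} = 1
         \<and> (\<integral>\<^sup>+ t. ennreal (\<bar>t\<bar> powr (2 * \<alpha>)) \<partial>Ls) < \<infinity>
         \<and> (\<forall>n\<ge>1. \<forall>t\<ge>0. tail (Lam n) t \<le> C0 * tail Ls t)"
    and beta: "\<beta> \<ge> 0" "\<beta> > - (b + m) / (\<sigma> * lambda)"
    and R_loc: "\<And>n T. n \<ge> 1 \<Longrightarrow> T \<ge> 0 \<Longrightarrow> set_integrable lborel {0..T} (R n)"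
    and R_eq: "\<And>n t. n \<ge> 1 \<Longrightarrow> t \<ge> 0 \<Longrightarrow>
         R n t = lam n * mn n * tail (Lam n) t
               + lam n * mn n * (LINT s:{0..t}|lborel. R n (t - s) * tail (Lam n) s)"
  shows "b + m + \<beta> * \<sigma> * lambda > 0
    \<and> (\<forall>\<^sub>F n in sequentially. set_integrable lborel {0..}
          (\<lambda>t. exp (- \<beta> * (\<gamma> n * t) / \<gamma> n) * R n (\<gamma> n * t)))
    \<and> (\<lambda>n. LINT t:{0..}|lborel. exp (- \<beta> * (\<gamma> n * t) / \<gamma> n) * R n (\<gamma> n * t))
        \<longlonglongrightarrow> 1 / (b + m + \<beta> * \<sigma> * lambda)
    \<and> (\<exists>C>0. \<exists>n0::nat. n0 \<ge> 1 \<and> (\<forall>n>n0. \<forall>\<kappa>::real. \<kappa> \<ge> 1 \<longrightarrow>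
          (\<integral>\<^sup>+ t. ennreal (\<bar>exp (- \<beta> * (\<gamma> n * t) / \<gamma> n) * R n (\<gamma> n * t)\<bar> powr \<kappa>
              * indicator {0..} t) \<partial>lborel) \<le> ennreal (C powr \<kappa>)))"
proof -
  have Lam: "nonneg_real_distribution (Lam n)" if "n \<ge> 1" for n
    using that Lam_prob Lam_sets Lam_supp by (simp add: nonneg_real_distribution_def)
  obtain C0 Ls where C0: "C0 > 0" and Ls: "nonneg_real_distribution Ls"
    and Ls_moment: "(\<integral>\<^sup>+ t. ennreal (\<bar>t\<bar> powr (2 * \<alpha>)) \<partial>Ls) < \<infinity>"
    and dominated: "\<And>n t. n \<ge> 1 \<Longrightarrow> t \<ge> 0 \<Longrightarrow> tail (Lam n) t \<le> C0 * tail Ls t"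
    using C2_2 by (auto simp: nonneg_real_distribution_def)
  obtain D where D: "0 \<le> D" and moment: "\<And>N. (\<And>t. t \<ge> 0 \<Longrightarrow> tail N t \<le> C0 * tail Ls t) \<Longrightarrow>
      (\<integral>\<^sup>+ t. indicator {0..} t * ennreal (t powr \<alpha>) * ennreal (tail N t) \<partial>lborel) \<le> ennreal D"
    by (rule nonneg_real_distribution.dominated_tail_powr_moment_bound
        [OF Ls less_imp_le[OF alpha(1)] Ls_moment less_imp_le[OF C0]]) blast
  define c0 where "c0 = b + m + \<beta> * \<sigma> * lambda"
  define K where "K n = lam n * mn n" for n
  define A where "A n = tail_laplace (Lam n) (\<beta> / \<gamma> n)" for n
  define Lv where "Lv n = K n * A n / (1 - K n * A n) / \<gamma> n" for n
  have c0: "0 < c0"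
    using beta(2) C1_sigma(2) C1_lam(2) by (simp add: c0_def divide_less_eq mult.assoc)
  have expansion: "\<forall>\<^sub>F n in sequentially. \<bar>\<eta>n n - A n - \<beta> / \<gamma> n * \<sigma>n n\<bar>
      \<le> (\<beta> / \<gamma> n) powr \<alpha> * D"
    using eventually_ge_at_top[of 1]
  proof eventually_elim
    case (elim n)
    show ?case
      unfolding A_def \<eta>n_def \<sigma>n_def using alpha beta(1) gamma_pos[OF elim] D moment[OF dominated[OF elim]]
      by (intro nonneg_real_distribution.tail_laplace_expansion[OF Lam[OF elim] Lam_int1[OF elim] Lam_int2[OF elim]]) auto
  qed
  have gap: "(\<lambda>n. \<gamma> n * (1 - K n * A n)) \<longlonglongrightarrow> c0"
    using renewal_gap_tendsto[OF gamma_top C1_lam(1) C1_eta(1) C1_sigma(1) C1_b m_def alpha(1) beta(1) expansion]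
    unfolding K_def c0_def .
  have "(\<lambda>n. 7 * (lam n * (1 - (1 - mn n)))) \<longlonglongrightarrow> 7 * (lambda * (1 - 0))"
    by (intro tendsto_intros C1_lam(1) tendsto_0_if_scaled_tendsto[OF gamma_top m_def])
  then have K: "(\<lambda>n. 7 * K n) \<longlonglongrightarrow> 7 * lambda" by (simp add: K_def)
  have Lv: "Lv \<longlonglongrightarrow> 1 / c0"
    unfolding Lv_def by (rule renewal_mass_ratio_tendsto[OF gamma_top gap c0])
  have "\<forall>\<^sub>F n in sequentially. 0 < 7 * K n"
    using C1_lam(2) by (intro order_tendstoD(1)[OF K]) simp
  with eventually_ge_at_top[of 1] order_tendstoD(1)[OF gap c0]
  have "\<forall>\<^sub>F n in sequentially. n \<ge> 1 \<and> 0 < \<gamma> n * (1 - K n * A n) \<and> 0 < K n"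
    by eventually_elim auto
  then have per_n: "\<forall>\<^sub>F n in sequentially. 0 \<le> 7 * K n \<and> 0 \<le> Lv n
      \<and> set_integrable lborel {0..} (\<lambda>t. exp (- \<beta> * (\<gamma> n * t) / \<gamma> n) * R n (\<gamma> n * t))
      \<and> (LINT t:{0..}|lborel. exp (- \<beta> * (\<gamma> n * t) / \<gamma> n) * R n (\<gamma> n * t)) = Lv n
      \<and> (\<forall>\<kappa>\<ge>1. (\<integral>\<^sup>+ t. ennreal (\<bar>exp (- \<beta> * (\<gamma> n * t) / \<gamma> n) * R n (\<gamma> n * t)\<bar> powr \<kappa>
          * indicator {0..} t) \<partial>lborel) \<le> ennreal ((7 * K n) powr (\<kappa> - 1) * Lv n))"
  proof eventually_elim
    case (elim n)
    then have n: "n \<ge> 1" and subcritical: "K n * A n < 1" and "0 < K n"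
      using gamma_pos[of n] by (auto simp: zero_less_mult_iff)
    note renewal = nonneg_real_distribution.rescaled_discounted_renewal[OF Lam[OF n] Lam_int1[OF n]
        \<open>0 < K n\<close> gamma_pos[OF n] beta(1) R_loc[OF n] R_eq[OF n, folded K_def], folded A_def]
    have "0 \<le> Lv n"
      using subcritical \<open>0 < K n\<close> gamma_pos[OF n] by (simp add: Lv_def A_def tail_laplace_nonneg)
    with renewal subcritical \<open>0 < K n\<close> show ?case by (simp add: Lv_def)
  qed
  show ?thesis
  proof (intro conjI)
    show "b + m + \<beta> * \<sigma> * lambda > 0" using c0 by (simp add: c0_def)
    show "\<forall>\<^sub>F n in sequentially. set_integrable lborel {0..} (\<lambda>t. exp (- \<beta> * (\<gamma> n * t) / \<gamma> n) * R n (\<gamma> n * t))"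
      using per_n by eventually_elim simp
    have "\<forall>\<^sub>F n in sequentially. Lv n = (LINT t:{0..}|lborel. exp (- \<beta> * (\<gamma> n * t) / \<gamma> n) * R n (\<gamma> n * t))"
      using per_n by eventually_elim simp
    from Lim_transform_eventually[OF Lv this]
    show "(\<lambda>n. LINT t:{0..}|lborel. exp (- \<beta> * (\<gamma> n * t) / \<gamma> n) * R n (\<gamma> n * t))
        \<longlonglongrightarrow> 1 / (b + m + \<beta> * \<sigma> * lambda)"
      unfolding c0_def .
    show "\<exists>C>0. \<exists>n0::nat. n0 \<ge> 1 \<and> (\<forall>n>n0. \<forall>\<kappa>::real. \<kappa> \<ge> 1 \<longrightarrow>
          (\<integral>\<^sup>+ t. ennreal (\<bar>exp (- \<beta> * (\<gamma> n * t) / \<gamma> n) * R n (\<gamma> n * t)\<bar> powr \<kappa>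
              * indicator {0..} t) \<partial>lborel) \<le> ennreal (C powr \<kappa>))"
      using per_n by (intro uniform_powr_bound_eventually[OF K Lv]) (auto elim: eventually_mono)
  qed
qed

end
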